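(* Let $\gamma_a,\gamma_s>0$, $\sigma_B>0$, $q>0$, let $\beta_s$ be the piecewise linear coalbedo described in the context, and fix $\varepsilon_a\in(0,2)$. For $\lambda\ge0$ consider the system \[ \gamma_a T_a'=-\lambda(T_a-T_s)+\varepsilon_a\sigma_B|T_s|^3T_s-2\varepsilon_a\sigma_B|T_a|^3T_a,\qquad \gamma_s T_s'=-\lambda(T_s-T_a)-\sigma_B|T_s|^3T_s+\varepsilon_a\sigma_B|T_a|^3T_a+q\beta_s(T_s). \] Let $\lambda^*\ge0$ and let $(T_a^{eq,\lambda^*},T_s^{eq,\lambda^*})$ be a warm [respectively cold] equilibrium point of the system with $\lambda=\lambda^*$, in the sense that $T_s^{eq,\lambda^*}\notin[T_{s,-},T_{s,+}]$. Then for $\lambda$ close to $\lambda^*$ there exists a unique equilibrium point $(T_a^{eq,\lambda},T_s^{eq,\lambda})$ of the system with parameter $\lambda$ (close to $(T_a^{eq,\lambda^*},T_s^{eq,\lambda^*})$); it is asymptotically exponentially stable; the maps $\lambda\mapsto T_s^{eq,\lambda}$ and $\lambda\mapsto T_a^{eq,\lambda}$ are locally analytic; locally, $\lambda\mapsto T_s^{eq,\lambda}$ is decreasing; and locally $\lambda\mapsto T_a^{eq,\lambda}$ is increasing if $\varepsilon_a\in(0,1)$ and decreasing if $\varepsilon_a\in(1,2)$.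
   Context: The coalbedo is $\beta_s(T)=\beta_{s,-}$ for $T\le T_{s,-}$, $\beta_s(T)=\beta_{s,-}+(\beta_{s,+}-\beta_{s,-})\frac{T-T_{s,-}}{T_{s,+}-T_{s,-}}$ for $T\in[T_{s,-},T_{s,+}]$, and $\beta_s(T)=\beta_{s,+}$ for $T\ge T_{s,+}$, where $T_{s,+}>T_{s,-}>0$ and $\beta_{s,+}>\beta_{s,-}>0$. An equilibrium point is a point with nonnegative components where both right-hand sides vanish; warm means $T_s>T_{s,+}$, cold means $T_s<T_{s,-}$. *)

theory Defs
  imports "HOL-Analysis.Analysis"
begin

text \<open>Piecewise linear coalbedo beta_s with parameters Tm = T_{s,-}, Tp = T_{s,+},
  bm = beta_{s,-}, bp = beta_{s,+}.\<close>
definition coalbedo :: "real \<Rightarrow> real \<Rightarrow> real \<Rightarrow> real \<Rightarrow> real \<Rightarrow> real" where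
  "coalbedo Tm Tp bm bp T =
     (if T \<le> Tm then bm
      else if T \<ge> Tp then bp
      else bm + (bp - bm) * (T - Tm) / (Tp - Tm))"

definition rhs_a :: "real \<Rightarrow> real \<Rightarrow> real \<Rightarrow> real \<Rightarrow> real \<Rightarrow> real" where
  "rhs_a sB ea lam Ta Ts =
     - lam * (Ta - Ts) + ea * sB * \<bar>Ts\<bar>^3 * Ts - 2 * ea * sB * \<bar>Ta\<bar>^3 * Ta"

definition rhs_s :: "real \<Rightarrow> real \<Rightarrow> real \<Rightarrow> real \<Rightarrow> real \<Rightarrow> real \<Rightarrow> real \<Rightarrow> real \<Rightarrow> real
                     \<Rightarrow> real \<Rightarrow> real" where
  "rhs_s sB q ea Tm Tp bm bp lam Ta Ts =
     - lam * (Ts - Ta) - sB * \<bar>Ts\<bar>^3 * Ts + ea * sB * \<bar>Ta\<bar>^3 * Ta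
     + q * coalbedo Tm Tp bm bp Ts"

definition ebm_field ::
  "real \<Rightarrow> real \<Rightarrow> real \<Rightarrow> real \<Rightarrow> real \<Rightarrow> real \<Rightarrow> real \<Rightarrow> real \<Rightarrow> real \<Rightarrow> real
   \<Rightarrow> real \<times> real \<Rightarrow> real \<times> real" where
  "ebm_field ga gs sB q ea Tm Tp bm bp lam p =
     (rhs_a sB ea lam (fst p) (snd p) / ga,
      rhs_s sB q ea Tm Tp bm bp lam (fst p) (snd p) / gs)"

definition ebm_equilibrium ::
  "real \<Rightarrow> real \<Rightarrow> real \<Rightarrow> real \<Rightarrow> real \<Rightarrow> real \<Rightarrow> real \<Rightarrow> real
   \<Rightarrow> real \<times> real \<Rightarrow> bool" where
  "ebm_equilibrium sB q ea Tm Tp bm bp lam p \<longleftrightarrow>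
     fst p \<ge> 0 \<and> snd p \<ge> 0 \<and>
     rhs_a sB ea lam (fst p) (snd p) = 0 \<and>
     rhs_s sB q ea Tm Tp bm bp lam (fst p) (snd p) = 0"

definition exp_stable :: "(real \<times> real \<Rightarrow> real \<times> real) \<Rightarrow> real \<times> real \<Rightarrow> bool" where
  "exp_stable F p \<longleftrightarrow>
     (\<exists>r>0. \<exists>C>0. \<exists>mu>0. \<forall>T\<ge>0. \<forall>x :: real \<Rightarrow> real \<times> real.
        (\<forall>t\<in>{0..T}. (x has_vector_derivative F (x t)) (at t within {0..T})) \<and>
        norm (x 0 - p) < r \<longrightarrow>
        (\<forall>t\<in>{0..T}. norm (x t - p) \<le> C * exp (- mu * t) * norm (x 0 - p)))"

definition real_analytic_on :: "(real \<Rightarrow> real) \<Rightarrow> real set \<Rightarrow> bool" where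
  "real_analytic_on f S \<longleftrightarrow>
     (\<forall>x\<in>S. \<exists>r>0. \<exists>c :: nat \<Rightarrow> real.
        \<forall>y. \<bar>y - x\<bar> < r \<longrightarrow> (\<lambda>n. c n * (y - x) ^ n) sums f y)"

end

(*
  Near a warm or cold equilibrium the coalbedo is locally constant, so the equilibria are the
  nonnegative solutions of two polynomial equations. Their sum expresses T_a^4 through T_s, and then
  the first one expresses lambda through T_s: the nearby equilibria form a curve parametrised by the
  surface temperature. At a point of this curve with lambda >= 0 the Jacobian of the vector field
  has negative trace and positive determinant 4 sB D (D = ebm_det), which gives exponential
  stability through a quadratic Lyapunov function, and lambda'(T_s) = - D / (ea T_a^3 (T_s - T_a))
  is negative. Inverting lambda(T_s) with the holomorphic inverse function theorem yields a real
  analytic, decreasing branch T_s(lambda); along it T_a has derivative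
  (1 - ea) T_s^3 (T_s - T_a) / D, whose sign is that of 1 - ea.
*)
theory Submission
  imports Defs "HOL-Complex_Analysis.Complex_Analysis"
begin

section \<open>Differential inequalities\<close>

lemma has_real_derivative_nonpos_imp_le:
  fixes f f' :: "real \<Rightarrow> real"
  assumes "0 \<le> t" "t \<le> T" "continuous_on {0..T} f"
    and deriv: "\<And>y. 0 < y \<Longrightarrow> y < t \<Longrightarrow> (f has_real_derivative f' y) (at y within {0..T})"
    and nonpos: "\<And>y. 0 < y \<Longrightarrow> y < t \<Longrightarrow> f' y \<le> 0"
  shows "f t \<le> f 0"
proof (cases "t = 0")
  case False
  then have "0 < t" using assms(1) by simp
  moreover have "continuous_on {0..t} f" using assms(2,3) continuous_on_subset by fastforce
  moreover have "(f has_derivative (\<lambda>d. f' y * d)) (at y)" if "0 < y" "y < t" for y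
  proof -
    have "at y within {0..T} = at y" using that assms(2) by (intro at_within_Icc_at) auto
    then show ?thesis using deriv[OF that] by (simp add: has_field_derivative_def)
  qed
  ultimately obtain \<xi> where "0 < \<xi>" "\<xi> < t" "f t - f 0 = f' \<xi> * t"
    by (rule mvt) auto
  then show ?thesis using nonpos[of \<xi>] mult_nonpos_nonneg[of "f' \<xi>" t] by simp
qed simp

lemma sublevel_set_forward_invariant:
  fixes g D :: "real \<Rightarrow> real"
  assumes cont: "continuous_on {0..T} g"
    and deriv: "\<And>t. t \<in> {0..T} \<Longrightarrow> (g has_real_derivative D t) (at t within {0..T})"
    and start: "g 0 < c"
    and nonpos: "\<And>t. t \<in> {0..T} \<Longrightarrow> g t < c \<Longrightarrow> D t \<le> 0"
    and t: "t \<in> {0..T}"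
  shows "g t < c"
proof (rule ccontr)
  assume "\<not> g t < c"
  define B where "B = {0..t} \<inter> g -` {c..}"
  have "B \<noteq> {}" using \<open>\<not> g t < c\<close> t by (auto simp: B_def)
  moreover have "bdd_below B" by (auto simp: B_def bdd_below_def)
  moreover have "closed B"
    unfolding B_def using t by (intro continuous_closed_preimage continuous_on_subset[OF cont]) auto
  ultimately have t1: "Inf B \<in> B" by (rule closed_contains_Inf)
  have below: "g y < c" if "0 \<le> y" "y < Inf B" for y
    using that t1 cInf_lower[of y B] \<open>bdd_below B\<close> by (fastforce simp: B_def)
  have "g (Inf B) \<le> g 0"
    using t1 t
    by (intro has_real_derivative_nonpos_imp_le[OF _ _ cont, where f'=D] deriv nonpos below)
      (auto simp: B_def)
  then show False using t1 start by (simp add: B_def)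
qed

lemma exp_decay_of_deriv_le:
  fixes g D :: "real \<Rightarrow> real"
  assumes cont: "continuous_on {0..T} g"
    and deriv: "\<And>t. t \<in> {0..T} \<Longrightarrow> (g has_real_derivative D t) (at t within {0..T})"
    and decay: "\<And>t. t \<in> {0..T} \<Longrightarrow> D t \<le> - c * g t"
    and t: "t \<in> {0..T}"
  shows "g t \<le> exp (- c * t) * g 0"
proof -
  have "exp (c * t) * g t \<le> exp (c * 0) * g 0"
  proof (rule has_real_derivative_nonpos_imp_le[where f = "\<lambda>t. exp (c * t) * g t"])
    show "continuous_on {0..T} (\<lambda>t. exp (c * t) * g t)" by (intro continuous_intros cont)
    fix y assume y: "0 < y" "y < t"
    then have "y \<in> {0..T}" using t by simp
    then show "((\<lambda>t. exp (c * t) * g t) has_real_derivative exp (c * y) * (c * g y + D y))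
        (at y within {0..T})"
      by (auto intro!: derivative_eq_intros deriv simp: algebra_simps)
    show "exp (c * y) * (c * g y + D y) \<le> 0"
      using decay[OF \<open>y \<in> {0..T}\<close>] by (simp add: mult_nonneg_nonpos)
  qed (use t in auto)
  then have "exp (- c * t) * (exp (c * t) * g t) \<le> exp (- c * t) * g 0"
    by (intro mult_left_mono) auto
  then show ?thesis by (simp add: exp_minus field_simps)
qed

lemma strict_antimono_on_if_deriv_neg:
  fixes f f' :: "real \<Rightarrow> real"
  assumes "convex B" "\<And>x. x \<in> B \<Longrightarrow> (f has_real_derivative f' x) (at x)"
    and "\<And>x. x \<in> B \<Longrightarrow> f' x < 0"
  shows "strict_antimono_on B f"
  unfolding monotone_on_def
proof (intro ballI impI)
  fix x y assume "x \<in> B" "y \<in> B" "x < y"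
  then have "z \<in> B" if "x \<le> z" "z \<le> y" for z
    using assms(1) that unfolding is_interval_convex_1[symmetric] is_interval_1 by blast
  then show "f y < f x" using assms(2,3) by (intro DERIV_neg_imp_decreasing[OF \<open>x < y\<close>]) blast
qed

lemma strict_mono_on_if_deriv_pos:
  fixes f f' :: "real \<Rightarrow> real"
  assumes "convex B" "\<And>x. x \<in> B \<Longrightarrow> (f has_real_derivative f' x) (at x)"
    and "\<And>x. x \<in> B \<Longrightarrow> f' x > 0"
  shows "strict_mono_on B f"
  unfolding monotone_on_def
proof (intro ballI impI)
  fix x y assume "x \<in> B" "y \<in> B" "x < y"
  then have "z \<in> B" if "x \<le> z" "z \<le> y" for z
    using assms(1) that unfolding is_interval_convex_1[symmetric] is_interval_1 by blast
  then show "f x < f y" using assms(2,3) by (intro DERIV_pos_imp_increasing[OF \<open>x < y\<close>]) blast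
qed

section \<open>Exponential stability of a planar equilibrium\<close>

text \<open>For \<open>M = [[mA, mB], [mC, mD]]\<close> this is \<open>V x = det M * \<bar>x\<bar>\<^sup>2 + \<bar>adj M x\<bar>\<^sup>2\<close>. Since
  \<open>adj M * M = det M * I\<close> and \<open>M + adj M = trace M * I\<close>, its derivative along \<open>x' = M x\<close>
  is \<open>2 * trace M * det M * \<bar>x\<bar>\<^sup>2\<close>.\<close>
definition planar_lyapunov :: "real \<Rightarrow> real \<Rightarrow> real \<Rightarrow> real \<Rightarrow> real \<Rightarrow> real \<Rightarrow> real" where
  "planar_lyapunov mA mB mC mD u v =
     (mA * mD - mB * mC) * (u\<^sup>2 + v\<^sup>2) + (mD * u - mB * v)\<^sup>2 + (mA * v - mC * u)\<^sup>2"

definition planar_lyapunov_deriv ::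
  "real \<Rightarrow> real \<Rightarrow> real \<Rightarrow> real \<Rightarrow> real \<Rightarrow> real \<Rightarrow> real \<Rightarrow> real \<Rightarrow> real" where
  "planar_lyapunov_deriv mA mB mC mD u v du dv =
     2 * (mA * mD - mB * mC) * (u * du + v * dv) + 2 * (mD * u - mB * v) * (mD * du - mB * dv)
     + 2 * (mA * v - mC * u) * (mA * dv - mC * du)"

lemma has_real_derivative_planar_lyapunov:
  assumes "(e1 has_real_derivative d1) (at t within S)" "(e2 has_real_derivative d2) (at t within S)"
  shows "((\<lambda>t. planar_lyapunov mA mB mC mD (e1 t) (e2 t)) has_real_derivative
           planar_lyapunov_deriv mA mB mC mD (e1 t) (e2 t) d1 d2) (at t within S)"
  unfolding planar_lyapunov_def planar_lyapunov_deriv_def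
  by (rule derivative_eq_intros assms refl)+ (simp add: power2_eq_square algebra_simps)

lemma planar_lyapunov_deriv_linear:
  "planar_lyapunov_deriv mA mB mC mD u v (mA * u + mB * v + r1) (mC * u + mD * v + r2) =
     2 * (mA + mD) * (mA * mD - mB * mC) * (u\<^sup>2 + v\<^sup>2) + planar_lyapunov_deriv mA mB mC mD u v r1 r2"
  unfolding planar_lyapunov_deriv_def by (simp add: power2_eq_square algebra_simps)

lemma planar_lyapunov_bounds:
  shows "(mA * mD - mB * mC) * (u\<^sup>2 + v\<^sup>2) \<le> planar_lyapunov mA mB mC mD u v"
    and "planar_lyapunov mA mB mC mD u v
           \<le> (mA * mD - mB * mC + mA\<^sup>2 + mB\<^sup>2 + mC\<^sup>2 + mD\<^sup>2) * (u\<^sup>2 + v\<^sup>2)"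
proof -
  show "(mA * mD - mB * mC) * (u\<^sup>2 + v\<^sup>2) \<le> planar_lyapunov mA mB mC mD u v"
    by (simp add: planar_lyapunov_def)
  have "(mD * u - mB * v)\<^sup>2 + (mA * v - mC * u)\<^sup>2 + (mD * v + mB * u)\<^sup>2 + (mA * u + mC * v)\<^sup>2
      = (mA\<^sup>2 + mB\<^sup>2 + mC\<^sup>2 + mD\<^sup>2) * (u\<^sup>2 + v\<^sup>2)"
    by (simp add: power2_eq_square algebra_simps)
  then have "(mD * u - mB * v)\<^sup>2 + (mA * v - mC * u)\<^sup>2 \<le> (mA\<^sup>2 + mB\<^sup>2 + mC\<^sup>2 + mD\<^sup>2) * (u\<^sup>2 + v\<^sup>2)"
    using zero_le_power2[of "mD * v + mB * u"] zero_le_power2[of "mA * u + mC * v"] by linarith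
  then show "planar_lyapunov mA mB mC mD u v
      \<le> (mA * mD - mB * mC + mA\<^sup>2 + mB\<^sup>2 + mC\<^sup>2 + mD\<^sup>2) * (u\<^sup>2 + v\<^sup>2)"
    unfolding planar_lyapunov_def by (simp add: distrib_right)
qed

lemma planar_lyapunov_deriv_bound:
  fixes mA mB mC mD u v du dv :: real
  defines "N \<equiv> \<bar>mA\<bar> + \<bar>mB\<bar> + \<bar>mC\<bar> + \<bar>mD\<bar>"
  shows "\<bar>planar_lyapunov_deriv mA mB mC mD u v du dv\<bar>
           \<le> (2 * \<bar>mA * mD - mB * mC\<bar> + 4 * N\<^sup>2) * ((\<bar>u\<bar> + \<bar>v\<bar>) * (\<bar>du\<bar> + \<bar>dv\<bar>))"
proof -
  have comb: "\<bar>p * x - q * y\<bar> \<le> N * (\<bar>x\<bar> + \<bar>y\<bar>)" if "\<bar>p\<bar> + \<bar>q\<bar> \<le> N" for p q x y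
  proof -
    have "\<bar>p * x - q * y\<bar> \<le> (\<bar>p\<bar> + \<bar>q\<bar>) * (\<bar>x\<bar> + \<bar>y\<bar>)"
      by (simp add: abs_mult algebra_simps abs_triangle_ineq4[THEN order_trans])
    also have "\<dots> \<le> N * (\<bar>x\<bar> + \<bar>y\<bar>)" using that by (intro mult_right_mono) auto
    finally show ?thesis .
  qed
  have prod: "\<bar>2 * (p * x - q * y) * (p * dx - q * dy)\<bar> \<le> 2 * N\<^sup>2 * ((\<bar>x\<bar> + \<bar>y\<bar>) * (\<bar>dx\<bar> + \<bar>dy\<bar>))"
    if "\<bar>p\<bar> + \<bar>q\<bar> \<le> N" for p q x y dx dy
  proof -
    have "\<bar>p * x - q * y\<bar> * \<bar>p * dx - q * dy\<bar> \<le> (N * (\<bar>x\<bar> + \<bar>y\<bar>)) * (N * (\<bar>dx\<bar> + \<bar>dy\<bar>))"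
      using that by (intro mult_mono comb) auto
    moreover have "\<bar>2 * (p * x - q * y) * (p * dx - q * dy)\<bar>
        = 2 * (\<bar>p * x - q * y\<bar> * \<bar>p * dx - q * dy\<bar>)"
      by (simp only: abs_mult abs_numeral)
    moreover have "2 * N\<^sup>2 * ((\<bar>x\<bar> + \<bar>y\<bar>) * (\<bar>dx\<bar> + \<bar>dy\<bar>))
        = 2 * ((N * (\<bar>x\<bar> + \<bar>y\<bar>)) * (N * (\<bar>dx\<bar> + \<bar>dy\<bar>)))"
      by (simp add: power2_eq_square)
    ultimately show ?thesis by linarith
  qed
  have "\<bar>2 * (mA * mD - mB * mC) * (u * du + v * dv)\<bar>
      \<le> 2 * \<bar>mA * mD - mB * mC\<bar> * ((\<bar>u\<bar> + \<bar>v\<bar>) * (\<bar>du\<bar> + \<bar>dv\<bar>))"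
  proof -
    have "\<bar>u * du + v * dv\<bar> \<le> \<bar>u\<bar> * \<bar>du\<bar> + \<bar>v\<bar> * \<bar>dv\<bar>"
      by (metis abs_mult abs_triangle_ineq)
    also have "\<dots> \<le> (\<bar>u\<bar> + \<bar>v\<bar>) * (\<bar>du\<bar> + \<bar>dv\<bar>)" by (simp add: algebra_simps)
    finally show ?thesis unfolding abs_mult abs_numeral by (intro mult_left_mono) auto
  qed
  moreover have "\<bar>2 * (mD * u - mB * v) * (mD * du - mB * dv)\<bar> \<le> 2 * N\<^sup>2 * ((\<bar>u\<bar> + \<bar>v\<bar>) * (\<bar>du\<bar> + \<bar>dv\<bar>))"
    by (rule prod) (simp add: N_def)
  moreover have "\<bar>2 * (mA * v - mC * u) * (mA * dv - mC * du)\<bar> \<le> 2 * N\<^sup>2 * ((\<bar>u\<bar> + \<bar>v\<bar>) * (\<bar>du\<bar> + \<bar>dv\<bar>))"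
    using prod[of mA mC v u dv du] by (simp add: N_def add.commute)
  ultimately show ?thesis
    unfolding planar_lyapunov_deriv_def
    using abs_triangle_ineq[of "2 * (mA * mD - mB * mC) * (u * du + v * dv)
        + 2 * (mD * u - mB * v) * (mD * du - mB * dv)" "2 * (mA * v - mC * u) * (mA * dv - mC * du)"]
      abs_triangle_ineq[of "2 * (mA * mD - mB * mC) * (u * du + v * dv)"
        "2 * (mD * u - mB * v) * (mD * du - mB * dv)"]
    by (simp only: distrib_right)
qed

lemma planar_lyapunov_deriv_perturbed:
  fixes mA mB mC mD u v r1 r2 K \<rho> :: real
  defines "\<Delta> \<equiv> mA * mD - mB * mC"
    and "L \<equiv> 2 * \<bar>mA * mD - mB * mC\<bar> + 4 * (\<bar>mA\<bar> + \<bar>mB\<bar> + \<bar>mC\<bar> + \<bar>mD\<bar>)\<^sup>2"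
  assumes "K \<ge> 0" "\<bar>u\<bar> < \<rho>" "\<bar>v\<bar> < \<rho>" and r: "\<bar>r1\<bar> + \<bar>r2\<bar> \<le> 2 * K * (u\<^sup>2 + v\<^sup>2)"
    and small: "4 * L * K * \<rho> \<le> - (mA + mD) * \<Delta>"
  shows "planar_lyapunov_deriv mA mB mC mD u v (mA * u + mB * v + r1) (mC * u + mD * v + r2)
           \<le> (mA + mD) * \<Delta> * (u\<^sup>2 + v\<^sup>2)"
proof -
  have "L \<ge> 0" by (simp add: L_def)
  have "\<bar>planar_lyapunov_deriv mA mB mC mD u v r1 r2\<bar> \<le> L * ((\<bar>u\<bar> + \<bar>v\<bar>) * (\<bar>r1\<bar> + \<bar>r2\<bar>))"
    using planar_lyapunov_deriv_bound unfolding L_def .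
  also have "\<dots> \<le> L * ((2 * \<rho>) * (2 * K * (u\<^sup>2 + v\<^sup>2)))"
    using assms(4,5) r \<open>L \<ge> 0\<close> by (intro mult_left_mono mult_mono) auto
  also have "\<dots> = (4 * L * K * \<rho>) * (u\<^sup>2 + v\<^sup>2)" by (simp add: algebra_simps)
  also have "\<dots> \<le> - (mA + mD) * \<Delta> * (u\<^sup>2 + v\<^sup>2)" using small by (simp add: mult_right_mono)
  finally show ?thesis
    using planar_lyapunov_deriv_linear[of mA mB mC mD u v r1 r2] unfolding \<Delta>_def by linarith
qed

lemma planar_lyapunov_local_decrease:
  fixes F :: "real \<times> real \<Rightarrow> real \<times> real"
  assumes trace: "mA + mD < 0" and det: "mA * mD - mB * mC > 0" and "\<eta> > 0" and "K \<ge> 0"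
    and remainder: "\<And>u v. \<bar>u\<bar> < \<eta> \<Longrightarrow> \<bar>v\<bar> < \<eta> \<Longrightarrow>
        \<bar>fst (F (a + u, s + v)) - (mA * u + mB * v)\<bar> \<le> K * (u\<^sup>2 + v\<^sup>2) \<and>
        \<bar>snd (F (a + u, s + v)) - (mC * u + mD * v)\<bar> \<le> K * (u\<^sup>2 + v\<^sup>2)"
  obtains \<eta>0 c where "0 < \<eta>0" "0 < c"
    "\<And>u v. \<bar>u\<bar> < \<eta>0 \<Longrightarrow> \<bar>v\<bar> < \<eta>0 \<Longrightarrow>
       planar_lyapunov_deriv mA mB mC mD u v (fst (F (a + u, s + v))) (snd (F (a + u, s + v)))
         \<le> - c * planar_lyapunov mA mB mC mD u v"
proof -
  define \<Delta> where "\<Delta> = mA * mD - mB * mC"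
  define X where "X = - (mA + mD) * \<Delta>"
  define L where "L = 2 * \<bar>\<Delta>\<bar> + 4 * (\<bar>mA\<bar> + \<bar>mB\<bar> + \<bar>mC\<bar> + \<bar>mD\<bar>)\<^sup>2"
  define U where "U = \<Delta> + mA\<^sup>2 + mB\<^sup>2 + mC\<^sup>2 + mD\<^sup>2"
  define \<eta>0 where "\<eta>0 = min \<eta> (X / (4 * L * K + 1))"
  have "X > 0" unfolding X_def \<Delta>_def using trace det by (intro mult_pos_pos) auto
  have "U > 0" using det unfolding U_def \<Delta>_def by (intro add_pos_nonneg) auto
  have "4 * L * K + 1 > 0" using \<open>K \<ge> 0\<close> by (simp add: L_def add_nonneg_pos)
  then have "\<eta>0 > 0" using \<open>X > 0\<close> \<open>\<eta> > 0\<close> by (simp add: \<eta>0_def)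
  have "\<eta>0 \<le> X / (4 * L * K + 1)" by (simp add: \<eta>0_def)
  then have "(4 * L * K + 1) * \<eta>0 \<le> X"
    using \<open>4 * L * K + 1 > 0\<close> by (simp add: pos_le_divide_eq mult.commute)
  then have small: "4 * L * K * \<eta>0 \<le> X" using \<open>\<eta>0 > 0\<close> by (simp add: algebra_simps)
  show ?thesis
  proof (rule that[OF \<open>\<eta>0 > 0\<close>])
    show "X / U > 0" using \<open>X > 0\<close> \<open>U > 0\<close> by simp
    fix u v assume u: "\<bar>u\<bar> < \<eta>0" and v: "\<bar>v\<bar> < \<eta>0"
    define r1 where "r1 = fst (F (a + u, s + v)) - (mA * u + mB * v)"
    define r2 where "r2 = snd (F (a + u, s + v)) - (mC * u + mD * v)"
    have "\<bar>u\<bar> < \<eta>" "\<bar>v\<bar> < \<eta>" using u v by (simp_all add: \<eta>0_def)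
    from remainder[OF this] have "\<bar>r1\<bar> + \<bar>r2\<bar> \<le> 2 * K * (u\<^sup>2 + v\<^sup>2)"
      unfolding r1_def r2_def by linarith
    from planar_lyapunov_deriv_perturbed[where mA = mA and mB = mB and mC = mC and mD = mD,
        OF \<open>K \<ge> 0\<close> u v this] small
    have "planar_lyapunov_deriv mA mB mC mD u v (fst (F (a + u, s + v))) (snd (F (a + u, s + v)))
        \<le> - X * (u\<^sup>2 + v\<^sup>2)"
      by (simp add: r1_def r2_def X_def \<Delta>_def L_def) (simp add: algebra_simps)
    also have "\<dots> \<le> - (X / U) * planar_lyapunov mA mB mC mD u v"
    proof -
      have "(X / U) * planar_lyapunov mA mB mC mD u v \<le> (X / U) * (U * (u\<^sup>2 + v\<^sup>2))"
        using planar_lyapunov_bounds(2) \<open>X > 0\<close> \<open>U > 0\<close>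
        by (intro mult_left_mono) (simp_all add: U_def \<Delta>_def)
      then show ?thesis using \<open>U > 0\<close> by simp
    qed
    finally show "planar_lyapunov_deriv mA mB mC mD u v (fst (F (a + u, s + v))) (snd (F (a + u, s + v)))
        \<le> - (X / U) * planar_lyapunov mA mB mC mD u v" .
  qed
qed

lemma lyapunov_decay_along_solution:
  fixes F :: "real \<times> real \<Rightarrow> real \<times> real" and V :: "real \<Rightarrow> real \<Rightarrow> real"
  assumes V_nonneg: "\<And>u v. 0 \<le> V u v"
    and V_deriv: "\<And>e1 e2 d1 d2 t S. (e1 has_real_derivative d1) (at t within S) \<Longrightarrow>
       (e2 has_real_derivative d2) (at t within S) \<Longrightarrow>
       ((\<lambda>t. V (e1 t) (e2 t)) has_real_derivative V' (e1 t) (e2 t) d1 d2) (at t within S)"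
    and decrease: "\<And>u v. V u v < c0 \<Longrightarrow>
       V' u v (fst (F (a + u, s + v))) (snd (F (a + u, s + v))) \<le> - c * V u v"
    and "c > 0"
    and x': "\<And>t. t \<in> {0..T} \<Longrightarrow> (x has_vector_derivative F (x t)) (at t within {0..T})"
    and start: "V (fst (x 0) - a) (snd (x 0) - s) < c0"
    and t: "t \<in> {0..T}"
  shows "V (fst (x t) - a) (snd (x t) - s) \<le> exp (- c * t) * V (fst (x 0) - a) (snd (x 0) - s)"
proof -
  define g where "g t = V (fst (x t) - a) (snd (x t) - s)" for t
  define D where "D t = V' (fst (x t) - a) (snd (x t) - s) (fst (F (x t))) (snd (F (x t)))" for t
  have deriv: "(g has_real_derivative D t) (at t within {0..T})" if "t \<in> {0..T}" for t
  proof -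
    have "((\<lambda>t. fst (x t) - a) has_real_derivative fst (F (x t))) (at t within {0..T})"
      "((\<lambda>t. snd (x t) - s) has_real_derivative snd (F (x t))) (at t within {0..T})"
      unfolding has_real_derivative_iff_has_vector_derivative
      using x'[OF that] by (auto intro!: derivative_eq_intros bounded_linear.has_vector_derivative
          [OF bounded_linear_fst] bounded_linear.has_vector_derivative[OF bounded_linear_snd])
    then show ?thesis unfolding g_def[abs_def] D_def by (rule V_deriv)
  qed
  then have cont: "continuous_on {0..T} g"
    by (meson DERIV_continuous continuous_on_eq_continuous_within)
  have decay: "D t \<le> - c * g t" if "g t < c0" for t
    using decrease[of "fst (x t) - a" "snd (x t) - s"] that by (simp add: g_def D_def)
  moreover have "D t \<le> 0" if "g t < c0" for t
  proof -
    have "0 \<le> c * g t" using V_nonneg \<open>c > 0\<close> by (simp add: g_def)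
    then show ?thesis using decay[OF that] by linarith
  qed
  ultimately have "D t \<le> - c * g t" if "t \<in> {0..T}" for t
    using sublevel_set_forward_invariant[OF cont deriv] start that by (simp add: g_def)
  from exp_decay_of_deriv_le[OF cont deriv this t] show ?thesis by (simp add: g_def)
qed

lemma exp_stable_of_linearization:
  fixes F :: "real \<times> real \<Rightarrow> real \<times> real"
  assumes trace: "mA + mD < 0" and det: "mA * mD - mB * mC > 0" and "\<eta> > 0" and "K \<ge> 0"
    and remainder: "\<And>u v. \<bar>u\<bar> < \<eta> \<Longrightarrow> \<bar>v\<bar> < \<eta> \<Longrightarrow>
        \<bar>fst (F (a + u, s + v)) - (mA * u + mB * v)\<bar> \<le> K * (u\<^sup>2 + v\<^sup>2) \<and>
        \<bar>snd (F (a + u, s + v)) - (mC * u + mD * v)\<bar> \<le> K * (u\<^sup>2 + v\<^sup>2)"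
  shows "exp_stable F (a, s)"
proof -
  obtain \<eta>0 c where "0 < \<eta>0" "0 < c" and decrease: "\<And>u v. \<bar>u\<bar> < \<eta>0 \<Longrightarrow> \<bar>v\<bar> < \<eta>0 \<Longrightarrow>
       planar_lyapunov_deriv mA mB mC mD u v (fst (F (a + u, s + v))) (snd (F (a + u, s + v)))
         \<le> - c * planar_lyapunov mA mB mC mD u v"
    using planar_lyapunov_local_decrease[OF assms] by blast
  define \<Delta> where "\<Delta> = mA * mD - mB * mC"
  define U where "U = \<Delta> + mA\<^sup>2 + mB\<^sup>2 + mC\<^sup>2 + mD\<^sup>2"
  define c0 where "c0 = \<Delta> * \<eta>0\<^sup>2 / 2"
  have "\<Delta> > 0" "U > 0" "c0 > 0"
    using det \<open>0 < \<eta>0\<close> unfolding U_def \<Delta>_def c0_def by (auto intro!: add_pos_nonneg)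
  have bounds: "\<Delta> * (u\<^sup>2 + v\<^sup>2) \<le> planar_lyapunov mA mB mC mD u v"
    "planar_lyapunov mA mB mC mD u v \<le> U * (u\<^sup>2 + v\<^sup>2)" for u v
    using planar_lyapunov_bounds by (simp_all add: \<Delta>_def U_def)
  have small: "\<bar>u\<bar> < \<eta>0 \<and> \<bar>v\<bar> < \<eta>0" if "planar_lyapunov mA mB mC mD u v < c0" for u v
  proof -
    have "\<Delta> * (u\<^sup>2 + v\<^sup>2) < \<Delta> * (\<eta>0\<^sup>2 / 2)" using bounds(1)[of u v] that unfolding c0_def by linarith
    then have "u\<^sup>2 + v\<^sup>2 < \<eta>0\<^sup>2 / 2" using \<open>\<Delta> > 0\<close> by (simp only: mult_less_cancel_left_pos)
    then have "u\<^sup>2 < \<eta>0\<^sup>2" "v\<^sup>2 < \<eta>0\<^sup>2"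
      using zero_le_power2[of u] zero_le_power2[of v] zero_le_power2[of \<eta>0] by linarith+
    then show ?thesis using \<open>0 < \<eta>0\<close> by (auto intro: power2_less_imp_less)
  qed
  have V_nonneg: "0 \<le> planar_lyapunov mA mB mC mD u v" for u v
    using bounds(1)[of u v] \<open>\<Delta> > 0\<close>
    by (meson order_trans zero_le_mult_iff add_nonneg_nonneg zero_le_power2 less_imp_le)
  have main: "\<forall>T\<ge>0. \<forall>x :: real \<Rightarrow> real \<times> real.
      (\<forall>t\<in>{0..T}. (x has_vector_derivative F (x t)) (at t within {0..T})) \<and>
      norm (x 0 - (a, s)) < sqrt (c0 / U) \<longrightarrow>
      (\<forall>t\<in>{0..T}. norm (x t - (a, s)) \<le> sqrt (U / \<Delta>) * exp (- (c / 2) * t) * norm (x 0 - (a, s)))"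
  proof (intro allI impI ballI, elim conjE)
    fix T t and x :: "real \<Rightarrow> real \<times> real"
    assume x': "\<forall>t\<in>{0..T}. (x has_vector_derivative F (x t)) (at t within {0..T})"
      and x0: "norm (x 0 - (a, s)) < sqrt (c0 / U)" and "t \<in> {0..T}"
    define V where "V t = planar_lyapunov mA mB mC mD (fst (x t) - a) (snd (x t) - s)" for t
    have norm_sq: "(norm (x t - (a, s)))\<^sup>2 = (fst (x t) - a)\<^sup>2 + (snd (x t) - s)\<^sup>2" for t
    proof -
      have "x t - (a, s) = (fst (x t) - a, snd (x t) - s)" by (simp add: prod_eq_iff)
      then show ?thesis by (simp add: norm_Pair)
    qed
    have V0: "V 0 \<le> U * (norm (x 0 - (a, s)))\<^sup>2" using bounds(2) by (simp add: V_def norm_sq)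
    also have "\<dots> < U * (sqrt (c0 / U))\<^sup>2"
      using x0 \<open>U > 0\<close> by (intro mult_strict_left_mono power_strict_mono) auto
    also have "\<dots> = c0" using \<open>U > 0\<close> \<open>c0 > 0\<close> by simp
    finally have "V 0 < c0" .
    have "\<Delta> * (norm (x t - (a, s)))\<^sup>2 \<le> V t" using bounds(1) by (simp add: V_def norm_sq)
    also have "\<dots> \<le> exp (- c * t) * V 0"
      unfolding V_def
    proof (rule lyapunov_decay_along_solution[OF V_nonneg has_real_derivative_planar_lyapunov _ \<open>c > 0\<close>])
      show "planar_lyapunov_deriv mA mB mC mD u v (fst (F (a + u, s + v))) (snd (F (a + u, s + v)))
          \<le> - c * planar_lyapunov mA mB mC mD u v" if "planar_lyapunov mA mB mC mD u v < c0" for u v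
        using decrease small[OF that] by blast
    qed (use x' \<open>V 0 < c0\<close> \<open>t \<in> {0..T}\<close> in \<open>auto simp: V_def\<close>)
    also have "\<dots> \<le> exp (- c * t) * (U * (norm (x 0 - (a, s)))\<^sup>2)" using V0 by simp
    also have "\<dots> = \<Delta> * ((sqrt (U / \<Delta>))\<^sup>2 * (exp (- (c / 2) * t))\<^sup>2 * (norm (x 0 - (a, s)))\<^sup>2)"
      using \<open>\<Delta> > 0\<close> \<open>U > 0\<close> exp_double[of "- (c / 2) * t"] by simp
    also have "\<dots> = \<Delta> * (sqrt (U / \<Delta>) * exp (- (c / 2) * t) * norm (x 0 - (a, s)))\<^sup>2"
      by (simp only: power_mult_distrib)
    finally have "(norm (x t - (a, s)))\<^sup>2 \<le> (sqrt (U / \<Delta>) * exp (- (c / 2) * t) * norm (x 0 - (a, s)))\<^sup>2"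
      using \<open>\<Delta> > 0\<close> by (simp only: mult_le_cancel_left_pos)
    then show "norm (x t - (a, s)) \<le> sqrt (U / \<Delta>) * exp (- (c / 2) * t) * norm (x 0 - (a, s))"
      by (rule power2_le_imp_le) (use \<open>\<Delta> > 0\<close> \<open>U > 0\<close> in simp)
  qed
  have "sqrt (c0 / U) > 0" "sqrt (U / \<Delta>) > 0" "c / 2 > 0"
    using \<open>\<Delta> > 0\<close> \<open>U > 0\<close> \<open>c0 > 0\<close> \<open>c > 0\<close> by auto
  then show ?thesis unfolding exp_stable_def using main by blast
qed

section \<open>Real analytic inverse functions\<close>

lemma real_analytic_on_subset: "real_analytic_on f S \<Longrightarrow> T \<subseteq> S \<Longrightarrow> real_analytic_on f T"
  unfolding real_analytic_on_def by blast

lemma real_analytic_on_Re_holomorphic: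
  assumes "f holomorphic_on ball (complex_of_real x0) e"
  shows "real_analytic_on (\<lambda>y. Re (f (complex_of_real y))) (ball x0 e)"
  unfolding real_analytic_on_def
proof
  fix x assume "x \<in> ball x0 e"
  define \<rho> where "\<rho> = e - dist x0 x"
  have "\<rho> > 0" using \<open>x \<in> ball x0 e\<close> by (simp add: \<rho>_def)
  have "ball (complex_of_real x) \<rho> \<subseteq> ball (complex_of_real x0) e"
    by (subst ball_subset_ball_iff) (simp add: \<rho>_def dist_commute)
  then have hol: "f holomorphic_on ball (complex_of_real x) \<rho>"
    using assms by (rule holomorphic_on_subset[rotated])
  define c where "c n = Re ((deriv ^^ n) f (complex_of_real x) / fact n)" for n
  have "(\<lambda>n. c n * (y - x) ^ n) sums Re (f (complex_of_real y))" if "\<bar>y - x\<bar> < \<rho>" for y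
  proof -
    have "complex_of_real y \<in> ball (complex_of_real x) \<rho>"
      using that by (simp add: dist_real_def abs_minus_commute)
    have "Re (w * (complex_of_real y - complex_of_real x) ^ n) = Re w * (y - x) ^ n" for w n
      by (simp only: of_real_diff[symmetric] of_real_power[symmetric]) simp
    then show ?thesis
      using sums_Re[OF holomorphic_power_series[OF hol \<open>complex_of_real y \<in> _\<close>]] by (simp only: c_def)
  qed
  then show "\<exists>r>0. \<exists>c. \<forall>y. \<bar>y - x\<bar> < r \<longrightarrow> (\<lambda>n. c n * (y - x) ^ n) sums Re (f (complex_of_real y))"
    using \<open>\<rho> > 0\<close> by blast
qed

lemma has_real_derivative_Re_holomorphic:
  assumes "f holomorphic_on ball (complex_of_real x0) e" "y \<in> ball x0 e"
  shows "((\<lambda>x. Re (f (complex_of_real x))) has_real_derivative Re (deriv f (complex_of_real y))) (at y)"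
proof -
  have "(f has_field_derivative deriv f (complex_of_real y)) (at (complex_of_real y))"
    using assms by (intro holomorphic_derivI[OF _ open_ball, where T = UNIV]) auto
  then show ?thesis by (intro has_field_derivative_Re has_vector_derivative_real_field)
qed

lemma deriv_holomorphic_of_real:
  assumes "G holomorphic_on U" "open U" "complex_of_real s \<in> U"
    and real: "\<And>x. complex_of_real x \<in> U \<Longrightarrow> G (complex_of_real x) = complex_of_real (g x)"
    and "(g has_real_derivative g') (at s)"
  shows "deriv G (complex_of_real s) = complex_of_real g'"
proof -
  have "open (complex_of_real -` U)" using \<open>open U\<close> by (intro open_vimage continuous_intros)
  have "(G has_field_derivative deriv G (complex_of_real s)) (at (complex_of_real s))"
    using assms(1-3) by (intro holomorphic_derivI[where T = UNIV]) auto
  then have "((\<lambda>x. G (complex_of_real x)) has_vector_derivative deriv G (complex_of_real s)) (at s)"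
    by (rule has_vector_derivative_real_field)
  moreover have "((\<lambda>x. G (complex_of_real x)) has_vector_derivative complex_of_real g') (at s)"
  proof (rule has_vector_derivative_transform_within_open)
    show "((\<lambda>x. complex_of_real (g x)) has_vector_derivative complex_of_real g') (at s)"
      using assms(5) unfolding has_real_derivative_iff_has_vector_derivative
      by (rule bounded_linear.has_vector_derivative[OF bounded_linear_of_real])
  qed (use \<open>open (complex_of_real -` U)\<close> assms(3) real in auto)
  ultimately show ?thesis by (rule vector_derivative_unique_at)
qed

lemma real_analytic_on_cong:
  assumes "open S" "\<And>x. x \<in> S \<Longrightarrow> f x = g x" "real_analytic_on f S"
  shows "real_analytic_on g S"
  unfolding real_analytic_on_def
proof
  fix x assume "x \<in> S"
  then obtain r c where "r > 0" and r: "\<And>y. \<bar>y - x\<bar> < r \<Longrightarrow> (\<lambda>n. c n * (y - x) ^ n) sums f y"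
    using assms(3) unfolding real_analytic_on_def by blast
  obtain e where "e > 0" "ball x e \<subseteq> S" using \<open>open S\<close> \<open>x \<in> S\<close> openE by blast
  have "(\<lambda>n. c n * (y - x) ^ n) sums g y" if "\<bar>y - x\<bar> < min r e" for y
    using r[of y] assms(2)[of y] that \<open>ball x e \<subseteq> S\<close> by (auto simp: dist_real_def abs_minus_commute)
  then show "\<exists>r>0. \<exists>c. \<forall>y. \<bar>y - x\<bar> < r \<longrightarrow> (\<lambda>n. c n * (y - x) ^ n) sums g y"
    using \<open>r > 0\<close> \<open>e > 0\<close> by (intro exI[of _ "min r e"]) auto
qed

lemma holomorphic_local_inverse_real:
  fixes G :: "complex \<Rightarrow> complex"
  assumes holo: "G holomorphic_on U" and "open U" and t: "complex_of_real t \<in> U"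
    and "deriv G (complex_of_real t) \<noteq> 0"
    and symm: "\<And>z. z \<in> U \<Longrightarrow> cnj z \<in> U \<and> G (cnj z) = cnj (G z)"
    and "r0 > 0"
  obtains r \<epsilon> H where "0 < r" "r \<le> r0" "ball (complex_of_real t) r \<subseteq> U"
    "inj_on G (ball (complex_of_real t) r)" "\<epsilon> > 0"
    "H holomorphic_on ball (G (complex_of_real t)) \<epsilon>"
    "\<And>w. w \<in> ball (G (complex_of_real t)) \<epsilon> \<Longrightarrow>
       H w \<in> ball (complex_of_real t) r \<and> G (H w) = w \<and> deriv G (H w) * deriv H w = 1"
    "\<And>w. w \<in> ball (G (complex_of_real t)) \<epsilon> \<Longrightarrow> w \<in> \<real> \<Longrightarrow> H w \<in> \<real>"
proof -
  let ?t = "complex_of_real t"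
  obtain r1 where "r1 > 0" "ball ?t r1 \<subseteq> U" "inj_on G (ball ?t r1)"
    using has_complex_derivative_locally_injective[OF holo t \<open>open U\<close> assms(4)] by blast
  define r where "r = min r1 r0"
  have "ball ?t r \<subseteq> ball ?t r1" by (rule subset_ball) (simp add: r_def)
  then have r: "0 < r" "r \<le> r0" "ball ?t r \<subseteq> U" "inj_on G (ball ?t r)"
    using \<open>r1 > 0\<close> \<open>r0 > 0\<close> \<open>ball ?t r1 \<subseteq> U\<close> inj_on_subset[OF \<open>inj_on G (ball ?t r1)\<close>]
    by (auto simp: r_def)
  have holr: "G holomorphic_on ball ?t r" using holo r(3) by (rule holomorphic_on_subset)
  obtain H where H: "H holomorphic_on G ` ball ?t r"
    "\<And>z. z \<in> ball ?t r \<Longrightarrow> deriv G z * deriv H (G z) = 1"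
    "\<And>z. z \<in> ball ?t r \<Longrightarrow> H (G z) = z"
    using holomorphic_has_inverse[OF holr open_ball r(4)] by blast
  have "open (G ` ball ?t r)" by (rule open_mapping_thm3[OF holr open_ball r(4)])
  moreover have "G ?t \<in> G ` ball ?t r" using r by auto
  ultimately obtain \<epsilon> where "\<epsilon> > 0" and \<epsilon>: "ball (G ?t) \<epsilon> \<subseteq> G ` ball ?t r"
    using openE by blast
  have Hw: "H w \<in> ball ?t r \<and> G (H w) = w \<and> deriv G (H w) * deriv H w = 1"
    if "w \<in> ball (G ?t) \<epsilon>" for w
    using \<epsilon> that H(2,3) by auto
  have "H w \<in> \<real>" if w: "w \<in> ball (G ?t) \<epsilon>" "w \<in> \<real>" for w
  proof -
    \<comment> \<open>\<open>cnj (H w)\<close> is a second preimage of the real value \<open>w\<close> in the ball\<close>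
    have "dist ?t (cnj (H w)) = dist ?t (H w)"
      by (metis complex_cnj_complex_of_real complex_cnj_diff complex_mod_cnj dist_norm)
    then have "cnj (H w) \<in> ball ?t r" using Hw[OF w(1)] by simp
    moreover have "G (cnj (H w)) = G (H w)"
      using symm[of "H w"] Hw[OF w(1)] r(3) w(2) by (auto simp: Reals_cnj_iff)
    ultimately have "cnj (H w) = H w" using r(4) Hw[OF w(1)] by (metis inj_onD)
    then show ?thesis by (simp add: Reals_cnj_iff)
  qed
  then show ?thesis
    using that[OF r(1-4) \<open>\<epsilon> > 0\<close> holomorphic_on_subset[OF H(1) \<epsilon>] Hw] by blast
qed

lemma real_analytic_local_inverse:
  fixes G F :: "complex \<Rightarrow> complex" and g g' f :: "real \<Rightarrow> real"
  assumes "open U" and holo: "G holomorphic_on U" "F holomorphic_on U"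
    and symm: "\<And>z. z \<in> U \<Longrightarrow> cnj z \<in> U \<and> G (cnj z) = cnj (G z)"
    and real: "\<And>s. complex_of_real s \<in> U \<Longrightarrow> G (complex_of_real s) = complex_of_real (g s) \<and>
        F (complex_of_real s) = complex_of_real (f s) \<and> (g has_real_derivative g' s) (at s)"
    and s0: "complex_of_real s0 \<in> U" and "g' s0 \<noteq> 0" and "r0 > 0"
  obtains r \<epsilon> S where "0 < r" "r \<le> r0" "0 < \<epsilon>" "\<And>s. \<bar>s - s0\<bar> < r \<Longrightarrow> complex_of_real s \<in> U"
    "inj_on g (ball s0 r)"
    "\<And>y. y \<in> ball (g s0) \<epsilon> \<Longrightarrow>
       S y \<in> ball s0 r \<and> g (S y) = y \<and> (S has_real_derivative inverse (g' (S y))) (at y)"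
    "real_analytic_on S (ball (g s0) \<epsilon>)" "real_analytic_on (\<lambda>y. f (S y)) (ball (g s0) \<epsilon>)"
proof -
  have dG: "deriv G (complex_of_real s) = complex_of_real (g' s)" if "complex_of_real s \<in> U" for s
    using deriv_holomorphic_of_real[OF holo(1) \<open>open U\<close> that] real that by blast
  have G0: "G (complex_of_real s0) = complex_of_real (g s0)" using real[OF s0] by blast
  have "deriv G (complex_of_real s0) \<noteq> 0" using dG[OF s0] \<open>g' s0 \<noteq> 0\<close> by simp
  obtain r \<epsilon> H where "0 < r" "r \<le> r0" and rU: "ball (complex_of_real s0) r \<subseteq> U"
    and inj: "inj_on G (ball (complex_of_real s0) r)" and "\<epsilon> > 0"
    and holH: "H holomorphic_on ball (G (complex_of_real s0)) \<epsilon>"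
    and Hw: "\<And>w. w \<in> ball (G (complex_of_real s0)) \<epsilon> \<Longrightarrow>
       H w \<in> ball (complex_of_real s0) r \<and> G (H w) = w \<and> deriv G (H w) * deriv H w = 1"
    and Hreal: "\<And>w. w \<in> ball (G (complex_of_real s0)) \<epsilon> \<Longrightarrow> w \<in> \<real> \<Longrightarrow> H w \<in> \<real>"
    using holomorphic_local_inverse_real[OF holo(1) \<open>open U\<close> s0 \<open>deriv G _ \<noteq> 0\<close> symm \<open>r0 > 0\<close>] by blast
  note holH = holH[unfolded G0] and Hw = Hw[unfolded G0] and Hreal = Hreal[unfolded G0]
  have inU: "complex_of_real s \<in> U" if "\<bar>s - s0\<bar> < r" for s
    using rU that by (auto simp: dist_real_def abs_minus_commute)
  define S where "S y = Re (H (complex_of_real y))" for y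
  have HS: "H (complex_of_real y) = complex_of_real (S y)" "S y \<in> ball s0 r" "g (S y) = y"
    "deriv H (complex_of_real y) = complex_of_real (inverse (g' (S y)))"
    if "y \<in> ball (g s0) \<epsilon>" for y
  proof -
    have y: "complex_of_real y \<in> ball (complex_of_real (g s0)) \<epsilon>" using that by simp
    show H: "H (complex_of_real y) = complex_of_real (S y)"
      using Hreal[OF y] by (simp add: S_def of_real_Re)
    then show "S y \<in> ball s0 r" using Hw[OF y] by simp
    then have "complex_of_real (S y) \<in> U" using inU by (simp add: dist_real_def abs_minus_commute)
    then have "complex_of_real (g (S y)) = complex_of_real y"
      and "complex_of_real (g' (S y)) * deriv H (complex_of_real y) = 1"
      using Hw[OF y] real dG unfolding H by auto
    then show "g (S y) = y" "deriv H (complex_of_real y) = complex_of_real (inverse (g' (S y)))"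
      by (auto simp: inverse_unique)
  qed
  have ball_U: "complex_of_real s \<in> U" if "s \<in> ball s0 r" for s
    using inU that by (simp add: dist_real_def abs_minus_commute)
  have inj_g: "inj_on g (ball s0 r)"
  proof (rule inj_onI)
    fix x y assume xy: "x \<in> ball s0 r" "y \<in> ball s0 r" "g x = g y"
    then have "G (complex_of_real x) = G (complex_of_real y)" using real ball_U by simp
    then have "complex_of_real x = complex_of_real y" by (rule inj_onD[OF inj]) (use xy in auto)
    then show "x = y" by simp
  qed
  have anS: "real_analytic_on S (ball (g s0) \<epsilon>)"
    using real_analytic_on_Re_holomorphic[OF holH] by (simp add: S_def[abs_def])
  have anfS: "real_analytic_on (\<lambda>y. f (S y)) (ball (g s0) \<epsilon>)"
  proof (rule real_analytic_on_cong[OF open_ball])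
    have "H w \<in> U" if "w \<in> ball (complex_of_real (g s0)) \<epsilon>" for w
      using Hw[OF that] rU by blast
    then have "(F \<circ> H) holomorphic_on ball (complex_of_real (g s0)) \<epsilon>"
      by (intro holomorphic_on_compose_gen[OF holH holo(2)]) auto
    then show "real_analytic_on (\<lambda>y. Re (F (H (complex_of_real y)))) (ball (g s0) \<epsilon>)"
      using real_analytic_on_Re_holomorphic by (simp add: o_def)
    show "Re (F (H (complex_of_real y))) = f (S y)" if "y \<in> ball (g s0) \<epsilon>" for y
      using HS(1)[OF that] real[OF ball_U[OF HS(2)[OF that]]] by simp
  qed
  have branch: "S y \<in> ball s0 r \<and> g (S y) = y \<and> (S has_real_derivative inverse (g' (S y))) (at y)"
    if "y \<in> ball (g s0) \<epsilon>" for y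
    using HS(2-4)[OF that] has_real_derivative_Re_holomorphic[OF holH that, folded S_def]
    by (simp only: Re_complex_of_real simp_thms)
  show ?thesis by (rule that[OF \<open>0 < r\<close> \<open>r \<le> r0\<close> \<open>\<epsilon> > 0\<close> inU inj_g branch anS anfS])
qed

section \<open>The curve of warm and cold equilibria\<close>

lemma coalbedo_pos:
  assumes "0 < bm" "bm < bp"
  shows "coalbedo Tm Tp bm bp T > 0"
proof -
  have "0 \<le> (bp - bm) * (T - Tm) / (Tp - Tm)" if "Tm < T" "T < Tp"
    using that assms by simp
  then show ?thesis using assms by (auto simp: coalbedo_def add_pos_nonneg)
qed

lemma coalbedo_locally_constant:
  assumes "Tm \<le> Tp" "T \<notin> {Tm..Tp}"
  obtains \<eta> where "\<eta> > 0" "\<And>y. \<bar>y - T\<bar> < \<eta> \<Longrightarrow> coalbedo Tm Tp bm bp y = coalbedo Tm Tp bm bp T"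
proof (cases "T < Tm")
  case True
  then show ?thesis by (intro that[of "Tm - T"]) (auto simp: coalbedo_def abs_less_iff)
next
  case False
  then have "Tp < T" using assms(2) by auto
  then show ?thesis using assms(1) by (intro that[of "T - Tp"]) (auto simp: coalbedo_def abs_less_iff)
qed

lemma power3_mult_self: "x ^ 3 * x = (x :: 'a :: monoid_mult) ^ 4"
  by (simp add: power_numeral_reduce mult.assoc)

text \<open>The equilibrium equations for nonnegative temperatures, with the absorbed solar flux
  \<open>q * \<beta>\<^sub>s(T\<^sub>s)\<close> frozen to a constant \<open>Q\<close>.\<close>

definition energy_balance :: "real \<Rightarrow> real \<Rightarrow> real \<Rightarrow> real \<Rightarrow> real \<Rightarrow> real \<Rightarrow> bool" where
  "energy_balance sB ea Q lam a s \<longleftrightarrow>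
     - lam * (a - s) + ea * sB * s ^ 4 - 2 * ea * sB * a ^ 4 = 0 \<and>
     - lam * (s - a) - sB * s ^ 4 + ea * sB * a ^ 4 + Q = 0"

lemma ebm_equilibrium_iff_energy_balance:
  assumes "coalbedo Tm Tp bm bp s = b"
  shows "ebm_equilibrium sB q ea Tm Tp bm bp lam (a, s) \<longleftrightarrow>
           0 \<le> a \<and> 0 \<le> s \<and> energy_balance sB ea (q * b) lam a s"
  using assms
  by (auto simp: ebm_equilibrium_def energy_balance_def rhs_a_def rhs_s_def power3_mult_self
      mult.assoc)

lemma energy_balance_pos:
  assumes "sB > 0" "ea > 0" "Q > 0" "lam \<ge> 0" "a \<ge> 0" "s \<ge> 0"
    and balance: "energy_balance sB ea Q lam a s"
  shows "0 < a" "a < s"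
proof -
  have eq1: "lam * (s - a) = ea * sB * (2 * a ^ 4 - s ^ 4)"
    and eq2: "lam * (s - a) = Q - sB * s ^ 4 + ea * sB * a ^ 4"
    using balance by (auto simp: energy_balance_def algebra_simps)
  have "ea * sB > 0" using assms by simp
  show "a < s"
  proof (rule ccontr)
    assume "\<not> a < s"
    then have "s ^ 4 \<le> a ^ 4" and "lam * (s - a) \<le> 0"
      using assms by (auto intro: power_mono mult_nonneg_nonpos)
    moreover have "ea * sB * a ^ 4 \<le> ea * sB * (2 * a ^ 4 - s ^ 4)"
      using \<open>s ^ 4 \<le> a ^ 4\<close> \<open>ea * sB > 0\<close> by (intro mult_left_mono) auto
    ultimately have "ea * sB * a ^ 4 \<le> 0" using eq1 by linarith
    then have "a ^ 4 \<le> 0" using assms(1,2) by (simp add: mult_le_0_iff)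
    then have "a = 0" using \<open>a \<ge> 0\<close> by (metis le_less not_le zero_less_power)
    then show False using eq2 \<open>\<not> a < s\<close> \<open>s \<ge> 0\<close> \<open>Q > 0\<close> by simp
  qed
  show "0 < a"
  proof (rule ccontr)
    assume "\<not> 0 < a"
    then have "a = 0" using assms by simp
    then have "lam * s + ea * sB * s ^ 4 = 0" using eq1 by (simp add: algebra_simps)
    moreover have "lam * s \<ge> 0" "ea * sB * s ^ 4 > 0"
      using assms \<open>a < s\<close> \<open>a = 0\<close> by auto
    ultimately show False by linarith
  qed
qed

text \<open>Adding the two equations of \<^const>\<open>energy_balance\<close> gives \<open>T\<^sub>a\<^sup>4 = curve_Ta4 T\<^sub>s\<close>,
  and the first one then determines \<open>\<lambda>\<close>: the warm and cold equilibria lie on a curve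
  parametrised by the surface temperature.\<close>

definition curve_Ta4 :: "real \<Rightarrow> real \<Rightarrow> real \<Rightarrow> real \<Rightarrow> real" where
  "curve_Ta4 sB ea Q s = (Q - (1 - ea) * sB * s ^ 4) / (ea * sB)"

definition curve_Ta :: "real \<Rightarrow> real \<Rightarrow> real \<Rightarrow> real \<Rightarrow> real" where
  "curve_Ta sB ea Q s = root 4 (curve_Ta4 sB ea Q s)"

definition curve_lam :: "real \<Rightarrow> real \<Rightarrow> real \<Rightarrow> real \<Rightarrow> real" where
  "curve_lam sB ea Q s = ea * sB * (2 * curve_Ta4 sB ea Q s - s ^ 4) / (s - curve_Ta sB ea Q s)"

lemma curve_Ta_pos: "0 < curve_Ta4 sB ea Q s \<Longrightarrow> 0 < curve_Ta sB ea Q s"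
  by (simp add: curve_Ta_def)

lemma curve_Ta_pow4: "0 < curve_Ta4 sB ea Q s \<Longrightarrow> curve_Ta sB ea Q s ^ 4 = curve_Ta4 sB ea Q s"
  by (simp add: curve_Ta_def real_root_pow_pos)

lemma energy_balance_iff_on_curve:
  assumes "sB > 0" "ea > 0" "0 < a" "a < s"
  shows "energy_balance sB ea Q lam a s \<longleftrightarrow>
           0 < curve_Ta4 sB ea Q s \<and> a = curve_Ta sB ea Q s \<and> lam = curve_lam sB ea Q s"
proof -
  have "energy_balance sB ea Q lam a s \<longleftrightarrow>
      a ^ 4 = curve_Ta4 sB ea Q s \<and> lam * (s - a) = ea * sB * (2 * a ^ 4 - s ^ 4)"
    using assms(1,2) by (auto simp: energy_balance_def curve_Ta4_def field_simps)
  also have "\<dots> \<longleftrightarrow> 0 < curve_Ta4 sB ea Q s \<and> a = curve_Ta sB ea Q s \<and>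
      lam = ea * sB * (2 * curve_Ta4 sB ea Q s - s ^ 4) / (s - a)"
  proof -
    have "a ^ 4 = curve_Ta4 sB ea Q s \<longleftrightarrow> 0 < curve_Ta4 sB ea Q s \<and> a = curve_Ta sB ea Q s"
      using assms(3) curve_Ta_pow4[of sB ea Q s] real_root_pos_unique[of 4 a "curve_Ta4 sB ea Q s"]
      by (auto simp: curve_Ta_def)
    then show ?thesis using assms(4) by (auto simp: eq_divide_eq)
  qed
  finally show ?thesis by (auto simp: curve_lam_def)
qed

lemma ebm_equilibrium_iff_on_curve:
  assumes "sB > 0" "ea > 0" "q * b > 0" "lam \<ge> 0" "coalbedo Tm Tp bm bp s = b"
  shows "ebm_equilibrium sB q ea Tm Tp bm bp lam (a, s) \<longleftrightarrow>
           0 < curve_Ta4 sB ea (q * b) s \<and> curve_Ta sB ea (q * b) s < s \<and>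
           a = curve_Ta sB ea (q * b) s \<and> lam = curve_lam sB ea (q * b) s"
proof
  assume "ebm_equilibrium sB q ea Tm Tp bm bp lam (a, s)"
  then have "0 \<le> a" "0 \<le> s" and balance: "energy_balance sB ea (q * b) lam a s"
    by (simp_all add: ebm_equilibrium_iff_energy_balance[OF assms(5)])
  with energy_balance_pos[OF assms(1-4)] have "0 < a" "a < s" by blast+
  then show "0 < curve_Ta4 sB ea (q * b) s \<and> curve_Ta sB ea (q * b) s < s \<and>
      a = curve_Ta sB ea (q * b) s \<and> lam = curve_lam sB ea (q * b) s"
    using balance energy_balance_iff_on_curve[OF assms(1,2) \<open>0 < a\<close> \<open>a < s\<close>] by auto
next
  assume on_curve: "0 < curve_Ta4 sB ea (q * b) s \<and> curve_Ta sB ea (q * b) s < s \<and>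
      a = curve_Ta sB ea (q * b) s \<and> lam = curve_lam sB ea (q * b) s"
  then have "0 < a" "a < s" using curve_Ta_pos by auto
  then have "energy_balance sB ea (q * b) lam a s"
    using on_curve energy_balance_iff_on_curve[OF assms(1,2)] by simp
  then show "ebm_equilibrium sB q ea Tm Tp bm bp lam (a, s)"
    using \<open>0 < a\<close> \<open>a < s\<close> by (simp add: ebm_equilibrium_iff_energy_balance[OF assms(5)])
qed

text \<open>The Jacobian determinant of the right-hand sides at a warm or cold equilibrium
  \<open>(a, s)\<close> is \<open>4 * sB\<close> times this.\<close>

definition ebm_det :: "real \<Rightarrow> real \<Rightarrow> real \<Rightarrow> real \<Rightarrow> real \<Rightarrow> real" where
  "ebm_det sB ea lam a s = lam * (ea * a ^ 3 + (1 - ea) * s ^ 3) + 4 * ea * sB * (2 - ea) * a ^ 3 * s ^ 3"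

lemma ebm_det_pos:
  assumes "sB > 0" "0 < ea" "ea < 2" "lam \<ge> 0" "0 < a" "a < s"
    and "energy_balance sB ea Q lam a s"
  shows "ebm_det sB ea lam a s > 0"
proof -
  have "ea * sB * (2 * a ^ 4 - s ^ 4) = lam * (s - a)"
    using assms(7) by (simp add: energy_balance_def algebra_simps)
  also have "\<dots> \<ge> 0" using assms(4,6) by simp
  finally have "0 \<le> ea * sB * (2 * a ^ 4 - s ^ 4)" .
  then have "s ^ 4 \<le> 2 * a ^ 4" using mult_pos_pos[OF assms(2,1)] by (simp add: zero_le_mult_iff)
  have "s ^ 3 \<le> 2 * a ^ 3"
  proof (rule ccontr)
    assume "\<not> s ^ 3 \<le> 2 * a ^ 3"
    then have "a * (2 * a ^ 3) < s * s ^ 3"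
      using assms(5,6) by (intro mult_strict_mono) auto
    moreover have "a * (2 * a ^ 3) = 2 * a ^ 4" "s * s ^ 3 = s ^ 4" by (simp_all add: power_numeral_reduce)
    ultimately have "2 * a ^ 4 < s ^ 4" by simp
    then show False using \<open>s ^ 4 \<le> 2 * a ^ 4\<close> by simp
  qed
  have "ea * a ^ 3 + (1 - ea) * s ^ 3 > 0"
  proof (cases "ea \<le> 1")
    case True
    then show ?thesis using assms by (intro add_pos_nonneg) auto
  next
    case False
    then have "(1 - ea) * (2 * a ^ 3) \<le> (1 - ea) * s ^ 3"
      using \<open>s ^ 3 \<le> 2 * a ^ 3\<close> by (intro mult_left_mono_neg) auto
    moreover have "(2 - ea) * a ^ 3 > 0" using assms by simp
    ultimately show ?thesis by (simp add: algebra_simps)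
  qed
  then have "lam * (ea * a ^ 3 + (1 - ea) * s ^ 3) \<ge> 0" using assms(4) by simp
  moreover have "4 * ea * sB * (2 - ea) * a ^ 3 * s ^ 3 > 0" using assms by simp
  ultimately show ?thesis unfolding ebm_det_def by linarith
qed

lemma ebm_det_on_curve_pos:
  assumes "sB > 0" "0 < ea" "ea < 2" "0 < curve_Ta4 sB ea Q s" "curve_Ta sB ea Q s < s"
    and "curve_lam sB ea Q s \<ge> 0"
  shows "ebm_det sB ea (curve_lam sB ea Q s) (curve_Ta sB ea Q s) s > 0"
proof -
  have "0 < curve_Ta sB ea Q s" using curve_Ta_pos[OF assms(4)] .
  moreover from this have "energy_balance sB ea Q (curve_lam sB ea Q s) (curve_Ta sB ea Q s) s"
    using energy_balance_iff_on_curve[OF assms(1,2)] assms(4,5) by simp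
  ultimately show ?thesis using ebm_det_pos assms(1,2,3,5,6) by blast
qed

lemma has_real_derivative_curve_Ta4:
  assumes "sB \<noteq> 0"
  shows "(curve_Ta4 sB ea Q has_real_derivative - 4 * (1 - ea) * s ^ 3 / ea) (at s)"
proof -
  have "((\<lambda>s. (Q - (1 - ea) * sB * s ^ 4) / (ea * sB)) has_real_derivative
      (0 - (1 - ea) * sB * (real 4 * s ^ (4 - Suc 0))) / (ea * sB)) (at s)"
    by (intro DERIV_cdivide DERIV_diff DERIV_const DERIV_cmult DERIV_pow)
  moreover have "(0 - (1 - ea) * sB * (real 4 * s ^ (4 - Suc 0))) / (ea * sB) = - 4 * (1 - ea) * s ^ 3 / ea"
    using assms by (cases "ea = 0") (simp_all add: field_simps)
  ultimately show ?thesis by (simp add: curve_Ta4_def[abs_def])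
qed

lemma has_real_derivative_curve_Ta:
  assumes "sB \<noteq> 0" "ea \<noteq> 0" "0 < curve_Ta4 sB ea Q s"
  shows "(curve_Ta sB ea Q has_real_derivative - (1 - ea) * s ^ 3 / (ea * curve_Ta sB ea Q s ^ 3)) (at s)"
proof -
  have "((\<lambda>s. root 4 (curve_Ta4 sB ea Q s)) has_real_derivative
      inverse (real 4 * root 4 (curve_Ta4 sB ea Q s) ^ (4 - Suc 0)) * (- 4 * (1 - ea) * s ^ 3 / ea)) (at s)"
    by (rule DERIV_chain2[OF DERIV_real_root has_real_derivative_curve_Ta4]) (use assms in auto)
  moreover have "inverse (real 4 * r ^ (4 - Suc 0)) * (- 4 * (1 - ea) * s ^ 3 / ea)
      = - (1 - ea) * s ^ 3 / (ea * r ^ 3)" for r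
    by (cases "ea = 0 \<or> r = 0") (auto simp: field_simps)
  ultimately show ?thesis by (simp add: curve_Ta_def[abs_def])
qed

lemma has_real_derivative_curve_lam:
  assumes "sB \<noteq> 0" "ea \<noteq> 0" "0 < curve_Ta4 sB ea Q s" "curve_Ta sB ea Q s \<noteq> s"
  defines "a \<equiv> curve_Ta sB ea Q s"
  shows "(curve_lam sB ea Q has_real_derivative
           - ebm_det sB ea (curve_lam sB ea Q s) a s / (ea * a ^ 3 * (s - a))) (at s)"
proof -
  have "a \<noteq> 0" "s - a \<noteq> 0" using assms curve_Ta_pos[of sB ea Q s] by auto
  have "((\<lambda>s. ea * sB * (2 * curve_Ta4 sB ea Q s - s ^ 4)) has_real_derivative
      ea * sB * (2 * (- 4 * (1 - ea) * s ^ 3 / ea) - real 4 * s ^ (4 - Suc 0))) (at s)"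
    by (intro DERIV_cmult DERIV_diff DERIV_pow has_real_derivative_curve_Ta4 assms(1))
  moreover have "ea * sB * (2 * (- 4 * (1 - ea) * s ^ 3 / ea) - real 4 * s ^ (4 - Suc 0))
      = - 4 * sB * (2 - ea) * s ^ 3"
    using assms(2) by (simp add: field_simps)
  ultimately have num: "((\<lambda>s. ea * sB * (2 * curve_Ta4 sB ea Q s - s ^ 4)) has_real_derivative
      - 4 * sB * (2 - ea) * s ^ 3) (at s)" by simp
  have den: "((\<lambda>s. s - curve_Ta sB ea Q s) has_real_derivative
      1 - (- (1 - ea) * s ^ 3 / (ea * a ^ 3))) (at s)"
    unfolding a_def using assms by (intro DERIV_diff DERIV_ident has_real_derivative_curve_Ta)
  define n where "n = ea * sB * (2 * curve_Ta4 sB ea Q s - s ^ 4)"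
  have "(curve_lam sB ea Q has_real_derivative
      (- 4 * sB * (2 - ea) * s ^ 3 * (s - a) - n * (1 - (- (1 - ea) * s ^ 3 / (ea * a ^ 3))))
        / ((s - a) * (s - a))) (at s)"
    unfolding n_def a_def curve_lam_def[abs_def]
    by (rule DERIV_divide[OF num den[unfolded a_def]]) (use \<open>s - a \<noteq> 0\<close> in \<open>simp add: a_def\<close>)
  moreover have "curve_lam sB ea Q s = n / (s - a)" by (simp add: curve_lam_def n_def a_def)
  moreover have "(- 4 * sB * (2 - ea) * s ^ 3 * (s - a) - n * (1 - (- (1 - ea) * s ^ 3 / (ea * a ^ 3))))
        / ((s - a) * (s - a)) = - ebm_det sB ea (n / (s - a)) a s / (ea * a ^ 3 * (s - a))"
    using \<open>a \<noteq> 0\<close> \<open>s - a \<noteq> 0\<close> assms(2)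
    by (simp add: ebm_det_def divide_simps) (simp add: algebra_simps)
  ultimately show ?thesis by simp
qed

section \<open>Holomorphic extension of the curve\<close>

text \<open>Holomorphic extensions of \<^const>\<open>curve_Ta4\<close>, \<^const>\<open>curve_Ta\<close> and \<^const>\<open>curve_lam\<close>
  (the fourth root being the principal branch), on a conjugation-invariant open set whose real
  points are the \<open>T\<^sub>s\<close> with \<open>0 < T\<^sub>a < T\<^sub>s\<close>.\<close>
definition cx_Ta4 :: "real \<Rightarrow> real \<Rightarrow> real \<Rightarrow> complex \<Rightarrow> complex" where
  "cx_Ta4 sB ea Q z = (of_real Q - of_real ((1 - ea) * sB) * z ^ 4) / of_real (ea * sB)"

definition cx_Ta :: "real \<Rightarrow> real \<Rightarrow> real \<Rightarrow> complex \<Rightarrow> complex" where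
  "cx_Ta sB ea Q z = exp (Ln (cx_Ta4 sB ea Q z) / 4)"

definition cx_lam :: "real \<Rightarrow> real \<Rightarrow> real \<Rightarrow> complex \<Rightarrow> complex" where
  "cx_lam sB ea Q z = of_real (ea * sB) * (2 * cx_Ta4 sB ea Q z - z ^ 4) / (z - cx_Ta sB ea Q z)"

definition curve_domain :: "real \<Rightarrow> real \<Rightarrow> real \<Rightarrow> complex set" where
  "curve_domain sB ea Q = {z. 0 < Re (cx_Ta4 sB ea Q z) \<and> 0 < Re (z - cx_Ta sB ea Q z)}"

lemma cx_Ta4_of_real: "cx_Ta4 sB ea Q (complex_of_real s) = complex_of_real (curve_Ta4 sB ea Q s)"
  by (simp add: cx_Ta4_def curve_Ta4_def)

lemma cx_Ta_of_real:
  assumes "0 < curve_Ta4 sB ea Q s"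
  shows "cx_Ta sB ea Q (complex_of_real s) = complex_of_real (curve_Ta sB ea Q s)"
proof -
  have "curve_Ta sB ea Q s = exp (ln (curve_Ta4 sB ea Q s) / 4)"
    using assms by (simp add: curve_Ta_def root_powr_inverse powr_def)
  then show ?thesis
    using assms by (simp add: cx_Ta_def cx_Ta4_of_real Ln_of_real flip: exp_of_real)
qed

lemma of_real_in_curve_domain:
  "complex_of_real s \<in> curve_domain sB ea Q \<longleftrightarrow> 0 < curve_Ta4 sB ea Q s \<and> curve_Ta sB ea Q s < s"
  by (auto simp: curve_domain_def cx_Ta4_of_real cx_Ta_of_real)

lemma cx_lam_of_real:
  assumes "0 < curve_Ta4 sB ea Q s"
  shows "cx_lam sB ea Q (complex_of_real s) = complex_of_real (curve_lam sB ea Q s)"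
  using assms by (simp add: cx_lam_def curve_lam_def cx_Ta4_of_real cx_Ta_of_real)

lemma cx_Ta4_nonpos_Reals: "z \<in> curve_domain sB ea Q \<Longrightarrow> cx_Ta4 sB ea Q z \<notin> \<real>\<^sub>\<le>\<^sub>0"
  by (auto simp: curve_domain_def complex_nonpos_Reals_iff)

lemma cnj_curve_domain:
  assumes "z \<in> curve_domain sB ea Q"
  shows "cnj z \<in> curve_domain sB ea Q \<and> cx_lam sB ea Q (cnj z) = cnj (cx_lam sB ea Q z)"
proof -
  have "cx_Ta4 sB ea Q (cnj z) = cnj (cx_Ta4 sB ea Q z)" by (simp add: cx_Ta4_def)
  moreover have "cx_Ta sB ea Q (cnj z) = cnj (cx_Ta sB ea Q z)"
    using cx_Ta4_nonpos_Reals[OF assms] calculation by (simp add: cx_Ta_def exp_cnj cnj_Ln)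
  ultimately show ?thesis using assms by (simp add: curve_domain_def cx_lam_def)
qed

lemma holomorphic_cx_Ta4: "cx_Ta4 sB ea Q holomorphic_on S"
  unfolding cx_Ta4_def divide_inverse by (intro holomorphic_intros)

lemma holomorphic_cx_Ta: "cx_Ta sB ea Q holomorphic_on {z. 0 < Re (cx_Ta4 sB ea Q z)}"
proof -
  have "(\<lambda>z. exp (Ln (cx_Ta4 sB ea Q z) / 4)) holomorphic_on {z. 0 < Re (cx_Ta4 sB ea Q z)}"
    by (intro holomorphic_intros holomorphic_cx_Ta4) (auto simp: complex_nonpos_Reals_iff)
  then show ?thesis by (simp add: cx_Ta_def[abs_def])
qed

lemma open_curve_domain: "open (curve_domain sB ea Q)"
proof -
  let ?U = "{z. 0 < Re (cx_Ta4 sB ea Q z)}"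
  have "continuous_on UNIV (\<lambda>z. Re (cx_Ta4 sB ea Q z))"
    using holomorphic_on_imp_continuous_on[OF holomorphic_cx_Ta4] by (intro continuous_intros)
  then have "open ?U" by (intro open_Collect_less continuous_on_const)
  moreover have "continuous_on ?U (\<lambda>z. Re (z - cx_Ta sB ea Q z))"
    using holomorphic_on_imp_continuous_on[OF holomorphic_cx_Ta] by (intro continuous_intros)
  ultimately have "open (?U \<inter> (\<lambda>z. Re (z - cx_Ta sB ea Q z)) -` {0<..})"
    by (intro continuous_open_preimage) auto
  then show ?thesis by (simp add: curve_domain_def vimage_def Collect_conj_eq)
qed

lemma holomorphic_cx_lam: "cx_lam sB ea Q holomorphic_on curve_domain sB ea Q"
proof -
  have "cx_Ta sB ea Q holomorphic_on curve_domain sB ea Q"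
    by (rule holomorphic_on_subset[OF holomorphic_cx_Ta]) (auto simp: curve_domain_def)
  then have "(\<lambda>z. of_real (ea * sB) * (2 * cx_Ta4 sB ea Q z - z ^ 4) / (z - cx_Ta sB ea Q z))
      holomorphic_on curve_domain sB ea Q"
    by (intro holomorphic_intros holomorphic_cx_Ta4) (auto simp: curve_domain_def)
  then show ?thesis by (simp add: cx_lam_def[abs_def])
qed

lemma curve_lam_local_inverse:
  assumes "sB > 0" "ea > 0" and s0: "0 < curve_Ta4 sB ea Q s0" "curve_Ta sB ea Q s0 < s0"
    and det: "ebm_det sB ea (curve_lam sB ea Q s0) (curve_Ta sB ea Q s0) s0 \<noteq> 0" and "r0 > 0"
  obtains r \<epsilon> Ts where "0 < r" "r \<le> r0" "0 < \<epsilon>"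
    "\<And>s. \<bar>s - s0\<bar> < r \<Longrightarrow> 0 < curve_Ta4 sB ea Q s \<and> curve_Ta sB ea Q s < s"
    "inj_on (curve_lam sB ea Q) (ball s0 r)"
    "\<And>lam. lam \<in> ball (curve_lam sB ea Q s0) \<epsilon> \<Longrightarrow> Ts lam \<in> ball s0 r \<and> curve_lam sB ea Q (Ts lam) = lam"
    "real_analytic_on Ts (ball (curve_lam sB ea Q s0) \<epsilon>)"
    "real_analytic_on (\<lambda>lam. curve_Ta sB ea Q (Ts lam)) (ball (curve_lam sB ea Q s0) \<epsilon>)"
    "\<And>lam s a. lam \<in> ball (curve_lam sB ea Q s0) \<epsilon> \<Longrightarrow> s = Ts lam \<Longrightarrow> a = curve_Ta sB ea Q s \<Longrightarrow>
       (Ts has_real_derivative - ea * a ^ 3 * (s - a) / ebm_det sB ea lam a s) (at lam) \<and>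
       ((\<lambda>lam. curve_Ta sB ea Q (Ts lam)) has_real_derivative
         (1 - ea) * s ^ 3 * (s - a) / ebm_det sB ea lam a s) (at lam)"
proof -
  define g' where "g' s = - ebm_det sB ea (curve_lam sB ea Q s) (curve_Ta sB ea Q s) s
      / (ea * curve_Ta sB ea Q s ^ 3 * (s - curve_Ta sB ea Q s))" for s
  have real: "cx_lam sB ea Q (complex_of_real s) = complex_of_real (curve_lam sB ea Q s) \<and>
      cx_Ta sB ea Q (complex_of_real s) = complex_of_real (curve_Ta sB ea Q s) \<and>
      (curve_lam sB ea Q has_real_derivative g' s) (at s)"
    if "complex_of_real s \<in> curve_domain sB ea Q" for s
    using that assms(1,2) has_real_derivative_curve_lam[of sB ea Q s]
    by (auto simp: of_real_in_curve_domain cx_lam_of_real cx_Ta_of_real g'_def)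
  have "cx_Ta sB ea Q holomorphic_on curve_domain sB ea Q"
    by (rule holomorphic_on_subset[OF holomorphic_cx_Ta]) (auto simp: curve_domain_def)
  moreover have "complex_of_real s0 \<in> curve_domain sB ea Q" using s0 by (simp add: of_real_in_curve_domain)
  moreover have "g' s0 \<noteq> 0" using s0 det assms(2) curve_Ta_pos[of sB ea Q s0] by (simp add: g'_def)
  ultimately have "complex_of_real s0 \<in> curve_domain sB ea Q" "g' s0 \<noteq> 0"
    and holo: "cx_Ta sB ea Q holomorphic_on curve_domain sB ea Q" by blast+
  obtain r \<epsilon> Ts where "0 < r" "r \<le> r0" "0 < \<epsilon>"
    and inU: "\<And>s. \<bar>s - s0\<bar> < r \<Longrightarrow> complex_of_real s \<in> curve_domain sB ea Q"
    and "inj_on (curve_lam sB ea Q) (ball s0 r)"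
    and branch: "\<And>y. y \<in> ball (curve_lam sB ea Q s0) \<epsilon> \<Longrightarrow> Ts y \<in> ball s0 r \<and>
       curve_lam sB ea Q (Ts y) = y \<and> (Ts has_real_derivative inverse (g' (Ts y))) (at y)"
    and "real_analytic_on Ts (ball (curve_lam sB ea Q s0) \<epsilon>)"
    and "real_analytic_on (\<lambda>y. curve_Ta sB ea Q (Ts y)) (ball (curve_lam sB ea Q s0) \<epsilon>)"
    using real_analytic_local_inverse[OF open_curve_domain holomorphic_cx_lam holo cnj_curve_domain real
      \<open>complex_of_real s0 \<in> _\<close> \<open>g' s0 \<noteq> 0\<close> \<open>r0 > 0\<close>] by blast
  have on_curve: "0 < curve_Ta4 sB ea Q s \<and> curve_Ta sB ea Q s < s" if "\<bar>s - s0\<bar> < r" for s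
    using inU[OF that] by (simp add: of_real_in_curve_domain)
  have "(Ts has_real_derivative - ea * a ^ 3 * (s - a) / ebm_det sB ea lam a s) (at lam) \<and>
      ((\<lambda>lam. curve_Ta sB ea Q (Ts lam)) has_real_derivative
        (1 - ea) * s ^ 3 * (s - a) / ebm_det sB ea lam a s) (at lam)"
    if lam: "lam \<in> ball (curve_lam sB ea Q s0) \<epsilon>" and s: "s = Ts lam" and a: "a = curve_Ta sB ea Q s"
    for lam s a
  proof -
    have "Ts lam \<in> ball s0 r" "curve_lam sB ea Q s = lam"
      and Ts': "(Ts has_real_derivative inverse (g' s)) (at lam)"
      using branch[OF lam] s by auto
    then have "0 < curve_Ta4 sB ea Q s" "0 < a"
      using on_curve[of s] curve_Ta_pos[of sB ea Q s] s a by (auto simp: dist_real_def abs_minus_commute)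
    from Ts' have Ts': "(Ts has_real_derivative - ea * a ^ 3 * (s - a) / ebm_det sB ea lam a s) (at lam)"
      unfolding g'_def a[symmetric] \<open>curve_lam sB ea Q s = lam\<close> by simp
    moreover have "((\<lambda>lam. curve_Ta sB ea Q (Ts lam)) has_real_derivative
        - (1 - ea) * s ^ 3 / (ea * a ^ 3) * (- ea * a ^ 3 * (s - a) / ebm_det sB ea lam a s)) (at lam)"
    proof (rule DERIV_chain2[OF _ Ts'])
      show "(curve_Ta sB ea Q has_real_derivative - (1 - ea) * s ^ 3 / (ea * a ^ 3)) (at (Ts lam))"
        using has_real_derivative_curve_Ta[of sB ea Q s] assms(1,2) \<open>0 < curve_Ta4 sB ea Q s\<close> s a
        by simp
    qed
    moreover have "- (1 - ea) * s ^ 3 / (ea * a ^ 3) * (- ea * a ^ 3 * (s - a) / ebm_det sB ea lam a s)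
        = (1 - ea) * s ^ 3 * (s - a) / ebm_det sB ea lam a s"
      using \<open>0 < a\<close> assms(2) by (cases "ebm_det sB ea lam a s = 0") (simp_all add: field_simps)
    ultimately show ?thesis by simp
  qed
  with that[OF \<open>0 < r\<close> \<open>r \<le> r0\<close> \<open>0 < \<epsilon>\<close> on_curve \<open>inj_on _ _\<close>] branch
    \<open>real_analytic_on Ts _\<close> \<open>real_analytic_on (\<lambda>y. curve_Ta sB ea Q (Ts y)) _\<close>
  show ?thesis by blast
qed

section \<open>The branch of equilibria\<close>

lemma quartic_taylor_bound:
  fixes s v :: real
  assumes "\<bar>v\<bar> \<le> 1"
  shows "\<bar>(s + v) ^ 4 - s ^ 4 - 4 * s ^ 3 * v\<bar> \<le> (6 * s\<^sup>2 + 4 * \<bar>s\<bar> + 1) * v\<^sup>2"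
proof -
  have "(s + v) ^ 4 - s ^ 4 - 4 * s ^ 3 * v = (6 * s\<^sup>2 + 4 * s * v + v\<^sup>2) * v\<^sup>2"
    by (simp add: power2_eq_square power_numeral_reduce algebra_simps)
  moreover have "\<bar>6 * s\<^sup>2 + 4 * s * v + v\<^sup>2\<bar> \<le> 6 * s\<^sup>2 + 4 * \<bar>s\<bar> + 1"
  proof -
    have "\<bar>4 * s * v\<bar> \<le> 4 * \<bar>s\<bar>" using assms by (simp add: abs_mult mult_left_le)
    moreover have "v\<^sup>2 \<le> 1" using assms by (simp add: abs_le_square_iff[of v 1, simplified])
    moreover have "0 \<le> s\<^sup>2" "0 \<le> v\<^sup>2" by simp_all
    ultimately show ?thesis
      using abs_ge_self[of "4 * s * v"] abs_ge_minus_self[of "4 * s * v"] unfolding abs_le_iff by linarith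
  qed
  ultimately show ?thesis by (simp add: abs_mult mult_right_mono)
qed

lemma abs_lincomb_le:
  fixes c1 c2 X Y P u v :: real
  assumes "\<bar>X\<bar> \<le> P * v\<^sup>2" "\<bar>Y\<bar> \<le> P * u\<^sup>2" "P \<ge> 0"
  shows "\<bar>c1 * X + c2 * Y\<bar> \<le> (\<bar>c1\<bar> + \<bar>c2\<bar>) * P * (u\<^sup>2 + v\<^sup>2)"
proof -
  have "\<bar>c1 * X + c2 * Y\<bar> \<le> \<bar>c1\<bar> * \<bar>X\<bar> + \<bar>c2\<bar> * \<bar>Y\<bar>" by (metis abs_mult abs_triangle_ineq)
  also have "\<dots> \<le> \<bar>c1\<bar> * (P * (u\<^sup>2 + v\<^sup>2)) + \<bar>c2\<bar> * (P * (u\<^sup>2 + v\<^sup>2))"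
  proof -
    have "P * v\<^sup>2 \<le> P * (u\<^sup>2 + v\<^sup>2)" "P * u\<^sup>2 \<le> P * (u\<^sup>2 + v\<^sup>2)"
      using assms(3) by (simp_all add: mult_left_mono)
    then show ?thesis using assms(1,2) by (intro add_mono mult_left_mono) auto
  qed
  finally show ?thesis by (simp add: algebra_simps)
qed

lemma ebm_field_taylor:
  fixes a s u v :: real
  defines "Qs \<equiv> (s + v) ^ 4 - s ^ 4 - 4 * s ^ 3 * v" and "Qa \<equiv> (a + u) ^ 4 - a ^ 4 - 4 * a ^ 3 * u"
  assumes "ga > 0" "gs > 0" and balance: "energy_balance sB ea (q * b) lam a s"
    and "0 < a + u" "0 < s + v" "coalbedo Tm Tp bm bp (s + v) = b"
  shows "fst (ebm_field ga gs sB q ea Tm Tp bm bp lam (a + u, s + v))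
           - (- (lam + 8 * ea * sB * a ^ 3) / ga * u + (lam + 4 * ea * sB * s ^ 3) / ga * v)
         = ea * sB / ga * Qs + (- 2 * ea * sB / ga) * Qa"
    and "snd (ebm_field ga gs sB q ea Tm Tp bm bp lam (a + u, s + v))
           - ((lam + 4 * ea * sB * a ^ 3) / gs * u + - (lam + 4 * sB * s ^ 3) / gs * v)
         = - sB / gs * Qs + ea * sB / gs * Qa"
proof -
  define k where "k = ea * sB"
  have E1: "- lam * (a - s) + k * s ^ 4 - 2 * k * a ^ 4 = 0"
    and E2: "- lam * (s - a) - sB * s ^ 4 + k * a ^ 4 + q * b = 0"
    using balance by (simp_all add: energy_balance_def k_def mult.assoc)
  have "rhs_a sB ea lam (a + u) (s + v)
      = - lam * ((a + u) - (s + v)) + k * (s + v) ^ 4 - 2 * k * (a + u) ^ 4"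
    using assms(6,7) by (simp add: rhs_a_def k_def power3_mult_self mult.assoc)
  also have "\<dots> = - (lam + 8 * k * a ^ 3) * u + (lam + 4 * k * s ^ 3) * v + k * Qs - 2 * k * Qa
      + (- lam * (a - s) + k * s ^ 4 - 2 * k * a ^ 4)"
    unfolding Qs_def Qa_def by algebra
  finally have Ra: "rhs_a sB ea lam (a + u) (s + v)
      = - (lam + 8 * k * a ^ 3) * u + (lam + 4 * k * s ^ 3) * v + k * Qs - 2 * k * Qa"
    unfolding E1 by simp
  have "rhs_s sB q ea Tm Tp bm bp lam (a + u) (s + v)
      = - lam * ((s + v) - (a + u)) - sB * (s + v) ^ 4 + k * (a + u) ^ 4 + q * b"
    using assms(6-8) by (simp add: rhs_s_def k_def power3_mult_self mult.assoc)
  also have "\<dots> = (lam + 4 * k * a ^ 3) * u - (lam + 4 * sB * s ^ 3) * v - sB * Qs + k * Qa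
      + (- lam * (s - a) - sB * s ^ 4 + k * a ^ 4 + q * b)"
    unfolding Qs_def Qa_def by algebra
  finally have Rs: "rhs_s sB q ea Tm Tp bm bp lam (a + u) (s + v)
      = (lam + 4 * k * a ^ 3) * u - (lam + 4 * sB * s ^ 3) * v - sB * Qs + k * Qa"
    unfolding E2 by simp
  show "fst (ebm_field ga gs sB q ea Tm Tp bm bp lam (a + u, s + v))
      - (- (lam + 8 * ea * sB * a ^ 3) / ga * u + (lam + 4 * ea * sB * s ^ 3) / ga * v)
      = ea * sB / ga * Qs + (- 2 * ea * sB / ga) * Qa"
    using assms(3) by (simp add: ebm_field_def Ra k_def field_simps)
  show "snd (ebm_field ga gs sB q ea Tm Tp bm bp lam (a + u, s + v))
      - ((lam + 4 * ea * sB * a ^ 3) / gs * u + - (lam + 4 * sB * s ^ 3) / gs * v)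
      = - sB / gs * Qs + ea * sB / gs * Qa"
    using assms(4) by (simp add: ebm_field_def Rs k_def field_simps)
qed

lemma exp_stable_ebm_equilibrium:
  assumes "ga > 0" "gs > 0" "sB > 0" "0 < ea" "ea < 2" "lam \<ge> 0" "0 < a" "a < s"
    and balance: "energy_balance sB ea (q * b) lam a s"
    and "\<eta> > 0" and coalbedo: "\<And>y. \<bar>y - s\<bar> < \<eta> \<Longrightarrow> coalbedo Tm Tp bm bp y = b"
  shows "exp_stable (ebm_field ga gs sB q ea Tm Tp bm bp lam) (a, s)"
proof -
  define P where "P = 6 * s\<^sup>2 + 4 * s + 1"
  define K where "K = (3 * ea * sB / ga + (1 + ea) * sB / gs) * P"
  have "P > 0" using assms unfolding P_def by (intro add_nonneg_pos) auto
  then have "3 * ea * sB / ga * P \<le> K" "(1 + ea) * sB / gs * P \<le> K" "K \<ge> 0"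
    using assms by (simp_all add: K_def distrib_right)
  show ?thesis
  proof (rule exp_stable_of_linearization[where \<eta> = "min (min a 1) \<eta>" and K = K])
    have "8 * ea * sB * a ^ 3 > 0" "4 * sB * s ^ 3 > 0" using assms by simp_all
    then have "- (lam + 8 * ea * sB * a ^ 3) < 0" "- (lam + 4 * sB * s ^ 3) < 0" using assms(6) by linarith+
    then show "- (lam + 8 * ea * sB * a ^ 3) / ga + - (lam + 4 * sB * s ^ 3) / gs < 0"
      using assms(1,2) by (intro add_neg_neg divide_neg_pos)
    have "- (lam + 8 * ea * sB * a ^ 3) / ga * (- (lam + 4 * sB * s ^ 3) / gs)
        - (lam + 4 * ea * sB * s ^ 3) / ga * ((lam + 4 * ea * sB * a ^ 3) / gs)
        = 4 * sB * ebm_det sB ea lam a s / (ga * gs)"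
      using assms by (simp add: ebm_det_def field_simps)
    also have "\<dots> > 0" using ebm_det_pos[OF assms(3-8) balance] assms by simp
    finally show "- (lam + 8 * ea * sB * a ^ 3) / ga * (- (lam + 4 * sB * s ^ 3) / gs)
        - (lam + 4 * ea * sB * s ^ 3) / ga * ((lam + 4 * ea * sB * a ^ 3) / gs) > 0" .
    show "min (min a 1) \<eta> > 0" "K \<ge> 0" using assms \<open>K \<ge> 0\<close> by auto
    fix u v assume "\<bar>u\<bar> < min (min a 1) \<eta>" "\<bar>v\<bar> < min (min a 1) \<eta>"
    then have "0 < a + u" "0 < s + v" "\<bar>u\<bar> \<le> 1" "\<bar>v\<bar> \<le> 1" "coalbedo Tm Tp bm bp (s + v) = b"
      using assms coalbedo[of "s + v"] by (auto simp: abs_less_iff)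
    note taylor = ebm_field_taylor[OF assms(1,2) balance this(1,2,5)]
    have Qs: "\<bar>(s + v) ^ 4 - s ^ 4 - 4 * s ^ 3 * v\<bar> \<le> P * v\<^sup>2"
      using quartic_taylor_bound[OF \<open>\<bar>v\<bar> \<le> 1\<close>, of s] assms by (simp add: P_def)
    have "6 * a\<^sup>2 + 4 * a + 1 \<le> P" using assms by (simp add: P_def power_strict_mono less_imp_le add_mono)
    then have Qa: "\<bar>(a + u) ^ 4 - a ^ 4 - 4 * a ^ 3 * u\<bar> \<le> P * u\<^sup>2"
      using quartic_taylor_bound[OF \<open>\<bar>u\<bar> \<le> 1\<close>, of a] assms
      by simp (meson mult_right_mono order_trans zero_le_power2)
    have "\<bar>ea * sB / ga * ((s + v) ^ 4 - s ^ 4 - 4 * s ^ 3 * v)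
        + (- 2 * ea * sB / ga) * ((a + u) ^ 4 - a ^ 4 - 4 * a ^ 3 * u)\<bar>
        \<le> 3 * ea * sB / ga * P * (u\<^sup>2 + v\<^sup>2)"
      using abs_lincomb_le[OF Qs Qa, of "ea * sB / ga" "- 2 * ea * sB / ga"] \<open>P > 0\<close> assms(1,3,4) by simp
    moreover have "\<bar>- sB / gs * ((s + v) ^ 4 - s ^ 4 - 4 * s ^ 3 * v)
        + ea * sB / gs * ((a + u) ^ 4 - a ^ 4 - 4 * a ^ 3 * u)\<bar>
        \<le> (1 + ea) * sB / gs * P * (u\<^sup>2 + v\<^sup>2)"
      using abs_lincomb_le[OF Qs Qa, of "- sB / gs" "ea * sB / gs"] \<open>P > 0\<close> assms(2-4)
      by (simp add: algebra_simps add_divide_distrib)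
    ultimately show "\<bar>fst (ebm_field ga gs sB q ea Tm Tp bm bp lam (a + u, s + v))
        - (- (lam + 8 * ea * sB * a ^ 3) / ga * u + (lam + 4 * ea * sB * s ^ 3) / ga * v)\<bar>
        \<le> K * (u\<^sup>2 + v\<^sup>2) \<and>
      \<bar>snd (ebm_field ga gs sB q ea Tm Tp bm bp lam (a + u, s + v))
        - ((lam + 4 * ea * sB * a ^ 3) / gs * u + - (lam + 4 * sB * s ^ 3) / gs * v)\<bar> \<le> K * (u\<^sup>2 + v\<^sup>2)"
      unfolding taylor using \<open>3 * ea * sB / ga * P \<le> K\<close> \<open>(1 + ea) * sB / gs * P \<le> K\<close>
      by (meson mult_right_mono order_trans zero_le_power2 add_nonneg_nonneg)
  qed
qed

lemma ebm_branch_point: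
  assumes "ga > 0" "gs > 0" "sB > 0" "0 < ea" "ea < 2" "Q = q * b" "Q > 0"
    and b_near: "\<And>y. \<bar>y - s0\<bar> < \<eta> \<Longrightarrow> coalbedo Tm Tp bm bp y = b" and "r \<le> \<eta>"
    and inj: "inj_on (curve_lam sB ea Q) (ball s0 r)"
    and s: "s \<in> ball s0 r" "0 < curve_Ta4 sB ea Q s" "curve_Ta sB ea Q s < s"
    and lam: "lam = curve_lam sB ea Q s" "lam \<ge> 0"
  shows "ebm_equilibrium sB q ea Tm Tp bm bp lam (curve_Ta sB ea Q s, s)"
    and "\<And>p. ebm_equilibrium sB q ea Tm Tp bm bp lam p \<Longrightarrow> dist p (a0, s0) < r \<Longrightarrow>
           p = (curve_Ta sB ea Q s, s)"
    and "exp_stable (ebm_field ga gs sB q ea Tm Tp bm bp lam) (curve_Ta sB ea Q s, s)"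
proof -
  have iff: "ebm_equilibrium sB q ea Tm Tp bm bp lam (a, s') \<longleftrightarrow>
      0 < curve_Ta4 sB ea Q s' \<and> curve_Ta sB ea Q s' < s' \<and>
      a = curve_Ta sB ea Q s' \<and> lam = curve_lam sB ea Q s'"
    if "s' \<in> ball s0 r" for a s'
    unfolding \<open>Q = q * b\<close> using assms(3,4,7) lam(2) b_near[of s'] that \<open>r \<le> \<eta>\<close>
    by (intro ebm_equilibrium_iff_on_curve) (simp_all add: \<open>Q = q * b\<close> dist_real_def abs_minus_commute)
  show "ebm_equilibrium sB q ea Tm Tp bm bp lam (curve_Ta sB ea Q s, s)"
    using iff[OF s(1)] s lam by simp
  show "p = (curve_Ta sB ea Q s, s)"
    if "ebm_equilibrium sB q ea Tm Tp bm bp lam p" "dist p (a0, s0) < r" for p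
  proof (cases p)
    case (Pair pa ps)
    have "dist ps s0 < r" using dist_snd_le[of p "(a0, s0)"] that(2) Pair by simp
    then have "ps \<in> ball s0 r" by (simp add: dist_commute)
    then have "pa = curve_Ta sB ea Q ps" "curve_lam sB ea Q ps = curve_lam sB ea Q s"
      using iff that(1) Pair lam(1) by auto
    moreover have "ps = s" using inj_onD[OF inj] calculation(2) \<open>ps \<in> ball s0 r\<close> s(1) by blast
    ultimately show ?thesis using Pair by simp
  qed
  show "exp_stable (ebm_field ga gs sB q ea Tm Tp bm bp lam) (curve_Ta sB ea Q s, s)"
  proof (rule exp_stable_ebm_equilibrium[OF assms(1-5) lam(2)])
    show "0 < curve_Ta sB ea Q s" "curve_Ta sB ea Q s < s" using curve_Ta_pos s(2,3) by auto
    then show "energy_balance sB ea (q * b) lam (curve_Ta sB ea Q s) s"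
      using energy_balance_iff_on_curve[OF assms(3,4)] s(2) lam(1) \<open>Q = q * b\<close> by simp
    show "\<eta> - \<bar>s - s0\<bar> > 0" using s(1) \<open>r \<le> \<eta>\<close> by (simp add: dist_real_def abs_minus_commute)
    show "coalbedo Tm Tp bm bp y = b" if "\<bar>y - s\<bar> < \<eta> - \<bar>s - s0\<bar>" for y
      using b_near[of y] that by linarith
  qed
qed

lemma curve_branch_monotone:
  assumes "sB > 0" "0 < ea" "ea < 2" "convex B" "B \<subseteq> {0..}"
    and on_curve: "\<And>lam. lam \<in> B \<Longrightarrow>
       0 < curve_Ta4 sB ea Q (Ts lam) \<and> curve_Ta sB ea Q (Ts lam) < Ts lam \<and>
       curve_lam sB ea Q (Ts lam) = lam"
    and deriv: "\<And>lam s a. lam \<in> B \<Longrightarrow> s = Ts lam \<Longrightarrow> a = curve_Ta sB ea Q s \<Longrightarrow>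
       (Ts has_real_derivative - ea * a ^ 3 * (s - a) / ebm_det sB ea lam a s) (at lam) \<and>
       ((\<lambda>lam. curve_Ta sB ea Q (Ts lam)) has_real_derivative
         (1 - ea) * s ^ 3 * (s - a) / ebm_det sB ea lam a s) (at lam)"
  shows "strict_antimono_on B Ts"
    and "ea < 1 \<Longrightarrow> strict_mono_on B (\<lambda>lam. curve_Ta sB ea Q (Ts lam))"
    and "1 < ea \<Longrightarrow> strict_antimono_on B (\<lambda>lam. curve_Ta sB ea Q (Ts lam))"
proof -
  define Ta where "Ta lam = curve_Ta sB ea Q (Ts lam)" for lam
  define D where "D lam = ebm_det sB ea lam (Ta lam) (Ts lam)" for lam
  define Ts' where "Ts' lam = - ea * Ta lam ^ 3 * (Ts lam - Ta lam) / D lam" for lam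
  define Ta' where "Ta' lam = (1 - ea) * Ts lam ^ 3 * (Ts lam - Ta lam) / D lam" for lam
  have slopes: "(Ts has_real_derivative Ts' lam) (at lam)" "(Ta has_real_derivative Ta' lam) (at lam)"
    "Ts' lam < 0" "ea < 1 \<Longrightarrow> Ta' lam > 0" "1 < ea \<Longrightarrow> Ta' lam < 0" if "lam \<in> B" for lam
  proof -
    have "0 < D lam" "0 < Ta lam" "Ta lam < Ts lam"
      using that on_curve[OF that] \<open>B \<subseteq> {0..}\<close> ebm_det_on_curve_pos[OF assms(1-3), of Q "Ts lam"]
        curve_Ta_pos by (auto simp: D_def Ta_def)
    show "(Ts has_real_derivative Ts' lam) (at lam)" "(Ta has_real_derivative Ta' lam) (at lam)"
      using deriv[OF that refl refl] by (simp_all add: Ts'_def Ta'_def D_def Ta_def[abs_def])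
    have "0 < Ts lam ^ 3 * (Ts lam - Ta lam)" "0 < ea * Ta lam ^ 3 * (Ts lam - Ta lam)"
      using \<open>0 < Ta lam\<close> \<open>Ta lam < Ts lam\<close> assms(2) by simp_all
    then show "Ts' lam < 0" "ea < 1 \<Longrightarrow> Ta' lam > 0" "1 < ea \<Longrightarrow> Ta' lam < 0"
      using \<open>0 < D lam\<close> by (simp_all add: Ts'_def Ta'_def divide_neg_pos mult_neg_pos mult.assoc)
  qed
  show "strict_antimono_on B Ts"
    and "ea < 1 \<Longrightarrow> strict_mono_on B (\<lambda>lam. curve_Ta sB ea Q (Ts lam))"
    and "1 < ea \<Longrightarrow> strict_antimono_on B (\<lambda>lam. curve_Ta sB ea Q (Ts lam))"
    unfolding Ta_def[symmetric]
    by (auto intro: strict_antimono_on_if_deriv_neg[OF \<open>convex B\<close>]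
        strict_mono_on_if_deriv_pos[OF \<open>convex B\<close>] slopes)
qed

lemma warm_cold_equilibrium_on_curve:
  assumes "sB > 0" "q > 0" "0 < ea" "ea < 2" "Tm < Tp" "0 < bm" "bm < bp" "lam0 \<ge> 0"
    and eq: "ebm_equilibrium sB q ea Tm Tp bm bp lam0 (Ta0, Ts0)" and "Ts0 \<notin> {Tm..Tp}"
  defines "b \<equiv> coalbedo Tm Tp bm bp Ts0"
  obtains \<eta> where "\<eta> > 0" "q * b > 0" "\<And>y. \<bar>y - Ts0\<bar> < \<eta> \<Longrightarrow> coalbedo Tm Tp bm bp y = b"
    "0 < curve_Ta4 sB ea (q * b) Ts0" "curve_Ta sB ea (q * b) Ts0 < Ts0"
    "Ta0 = curve_Ta sB ea (q * b) Ts0" "lam0 = curve_lam sB ea (q * b) Ts0"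
    "ebm_det sB ea lam0 Ta0 Ts0 > 0"
proof -
  have "q * b > 0" using assms coalbedo_pos[of bm bp Tm Tp Ts0] by (simp add: b_def)
  obtain \<eta> where "\<eta> > 0" and b_near: "\<And>y. \<bar>y - Ts0\<bar> < \<eta> \<Longrightarrow> coalbedo Tm Tp bm bp y = b"
    using coalbedo_locally_constant[OF less_imp_le[OF assms(5)] assms(10), of bm bp]
    unfolding b_def by blast
  have "0 < curve_Ta4 sB ea (q * b) Ts0 \<and> curve_Ta sB ea (q * b) Ts0 < Ts0 \<and>
      Ta0 = curve_Ta sB ea (q * b) Ts0 \<and> lam0 = curve_lam sB ea (q * b) Ts0"
    using ebm_equilibrium_iff_on_curve[OF assms(1,3) \<open>q * b > 0\<close> assms(8) b_near[of Ts0]] eq \<open>\<eta> > 0\<close>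
    by simp
  moreover from this have "ebm_det sB ea lam0 Ta0 Ts0 > 0"
    using ebm_det_on_curve_pos[OF assms(1,3,4)] assms(8) by blast
  ultimately show ?thesis using that \<open>\<eta> > 0\<close> \<open>q * b > 0\<close> b_near by blast
qed

theorem proposition2p6:
  fixes ga gs sB q ea Tm Tp bm bp lam0 Ta0 Ts0 :: real
  assumes "ga > 0" and "gs > 0" and "sB > 0" and "q > 0"
    and "0 < Tm" and "Tm < Tp" and "0 < bm" and "bm < bp"
    and "0 < ea" and "ea < 2"
    and "lam0 \<ge> 0"
    and "ebm_equilibrium sB q ea Tm Tp bm bp lam0 (Ta0, Ts0)"
    and "Ts0 \<notin> {Tm..Tp}"
  shows "\<exists>\<delta>>0. \<exists>\<rho>>0. \<exists>Ta Ts :: real \<Rightarrow> real.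
     (\<forall>lam \<in> ball lam0 \<delta> \<inter> {0..}.
        ebm_equilibrium sB q ea Tm Tp bm bp lam (Ta lam, Ts lam) \<and>
        dist (Ta lam, Ts lam) (Ta0, Ts0) < \<rho> \<and>
        (\<forall>p. ebm_equilibrium sB q ea Tm Tp bm bp lam p \<and> dist p (Ta0, Ts0) < \<rho>
              \<longrightarrow> p = (Ta lam, Ts lam)) \<and>
        exp_stable (ebm_field ga gs sB q ea Tm Tp bm bp lam) (Ta lam, Ts lam)) \<and>
     real_analytic_on Ta (ball lam0 \<delta>) \<and> real_analytic_on Ts (ball lam0 \<delta>) \<and>
     (\<forall>l1 \<in> ball lam0 \<delta> \<inter> {0..}. \<forall>l2 \<in> ball lam0 \<delta> \<inter> {0..}.
        l1 < l2 \<longrightarrow> Ts l2 < Ts l1) \<and>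
     (ea < 1 \<longrightarrow> (\<forall>l1 \<in> ball lam0 \<delta> \<inter> {0..}. \<forall>l2 \<in> ball lam0 \<delta> \<inter> {0..}.
        l1 < l2 \<longrightarrow> Ta l1 < Ta l2)) \<and>
     (1 < ea \<longrightarrow> (\<forall>l1 \<in> ball lam0 \<delta> \<inter> {0..}. \<forall>l2 \<in> ball lam0 \<delta> \<inter> {0..}.
        l1 < l2 \<longrightarrow> Ta l2 < Ta l1))"
proof -
  define Q where "Q = q * coalbedo Tm Tp bm bp Ts0"
  obtain \<eta> where "\<eta> > 0" "Q > 0" and b_near: "\<And>y. \<bar>y - Ts0\<bar> < \<eta> \<Longrightarrow>
      coalbedo Tm Tp bm bp y = coalbedo Tm Tp bm bp Ts0"
    and Ts0: "0 < curve_Ta4 sB ea Q Ts0" "curve_Ta sB ea Q Ts0 < Ts0"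
    and Ta0: "Ta0 = curve_Ta sB ea Q Ts0" and lam0: "lam0 = curve_lam sB ea Q Ts0"
    and "ebm_det sB ea lam0 Ta0 Ts0 > 0"
    using warm_cold_equilibrium_on_curve[OF assms(3,4,9,10,6,7,8,11,12,13)] unfolding Q_def by blast
  then have det: "ebm_det sB ea (curve_lam sB ea Q Ts0) (curve_Ta sB ea Q Ts0) Ts0 \<noteq> 0"
    using Ta0 lam0 by simp
  obtain r \<epsilon> Ts where "0 < r" "r \<le> \<eta>" "0 < \<epsilon>"
    and on_curve: "\<And>s. \<bar>s - Ts0\<bar> < r \<Longrightarrow> 0 < curve_Ta4 sB ea Q s \<and> curve_Ta sB ea Q s < s"
    and inj: "inj_on (curve_lam sB ea Q) (ball Ts0 r)"
    and branch: "\<And>lam. lam \<in> ball lam0 \<epsilon> \<Longrightarrow> Ts lam \<in> ball Ts0 r \<and> curve_lam sB ea Q (Ts lam) = lam"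
    and "real_analytic_on Ts (ball lam0 \<epsilon>)"
    and "real_analytic_on (\<lambda>lam. curve_Ta sB ea Q (Ts lam)) (ball lam0 \<epsilon>)"
    and deriv: "\<And>lam s a. lam \<in> ball lam0 \<epsilon> \<Longrightarrow> s = Ts lam \<Longrightarrow> a = curve_Ta sB ea Q s \<Longrightarrow>
       (Ts has_real_derivative - ea * a ^ 3 * (s - a) / ebm_det sB ea lam a s) (at lam) \<and>
       ((\<lambda>lam. curve_Ta sB ea Q (Ts lam)) has_real_derivative
         (1 - ea) * s ^ 3 * (s - a) / ebm_det sB ea lam a s) (at lam)"
    using curve_lam_local_inverse[OF assms(3,9) Ts0 det \<open>\<eta> > 0\<close>] unfolding lam0[symmetric] by blast
  define Ta where "Ta lam = curve_Ta sB ea Q (Ts lam)" for lam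
  have "Ts lam0 = Ts0"
    using branch[of lam0] inj_onD[OF inj, of "Ts lam0" Ts0] \<open>0 < r\<close> \<open>0 < \<epsilon>\<close> lam0 by simp
  then have "isCont (\<lambda>lam. (Ta lam, Ts lam)) lam0" "(Ta lam0, Ts lam0) = (Ta0, Ts0)"
    using deriv[of lam0] \<open>0 < \<epsilon>\<close> Ta0 by (auto simp: Ta_def[abs_def] intro!: continuous_intros DERIV_isCont)
  then obtain d where "d > 0" and close: "\<And>lam. dist lam lam0 < d \<Longrightarrow> dist (Ta lam, Ts lam) (Ta0, Ts0) < r"
    using \<open>0 < r\<close> unfolding continuous_at_eps_delta by metis
  define \<delta> where "\<delta> = min \<epsilon> d"
  have lam_ball: "lam \<in> ball lam0 \<epsilon>" "Ts lam \<in> ball Ts0 r" "curve_lam sB ea Q (Ts lam) = lam"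
    "0 < curve_Ta4 sB ea Q (Ts lam)" "curve_Ta sB ea Q (Ts lam) < Ts lam"
    if "lam \<in> ball lam0 \<delta>" for lam
    using that branch on_curve by (auto simp: \<delta>_def dist_real_def abs_minus_commute)
  have "ebm_equilibrium sB q ea Tm Tp bm bp lam (Ta lam, Ts lam) \<and>
      dist (Ta lam, Ts lam) (Ta0, Ts0) < r \<and>
      (\<forall>p. ebm_equilibrium sB q ea Tm Tp bm bp lam p \<and> dist p (Ta0, Ts0) < r \<longrightarrow> p = (Ta lam, Ts lam)) \<and>
      exp_stable (ebm_field ga gs sB q ea Tm Tp bm bp lam) (Ta lam, Ts lam)"
    if "lam \<in> ball lam0 \<delta> \<inter> {0..}" for lam
  proof -
    have s: "Ts lam \<in> ball Ts0 r" "0 < curve_Ta4 sB ea Q (Ts lam)" "curve_Ta sB ea Q (Ts lam) < Ts lam"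
      "lam = curve_lam sB ea Q (Ts lam)" "lam \<ge> 0"
      using lam_ball that by auto
    note point = ebm_branch_point[OF assms(1,2,3,9,10) Q_def \<open>Q > 0\<close> b_near \<open>r \<le> \<eta>\<close> inj s,
        folded Ta_def]
    have "dist lam lam0 < d" using that by (simp add: \<delta>_def dist_commute)
    then show ?thesis using point(1,3) point(2)[of _ Ta0] close by blast
  qed
  moreover have "ball lam0 \<delta> \<subseteq> ball lam0 \<epsilon>" by (rule subset_ball) (simp add: \<delta>_def)
  then have "real_analytic_on Ta (ball lam0 \<delta>)" "real_analytic_on Ts (ball lam0 \<delta>)"
    using \<open>real_analytic_on Ts (ball lam0 \<epsilon>)\<close> \<open>real_analytic_on (\<lambda>lam. curve_Ta sB ea Q (Ts lam)) _\<close>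
    by (auto simp: Ta_def[abs_def] intro: real_analytic_on_subset)
  moreover have "strict_antimono_on (ball lam0 \<delta> \<inter> {0..}) Ts"
    and "ea < 1 \<Longrightarrow> strict_mono_on (ball lam0 \<delta> \<inter> {0..}) Ta"
    and "1 < ea \<Longrightarrow> strict_antimono_on (ball lam0 \<delta> \<inter> {0..}) Ta"
    using curve_branch_monotone[OF assms(3,9,10), of "ball lam0 \<delta> \<inter> {0..}" Q Ts] lam_ball deriv
    unfolding Ta_def[abs_def] by (auto simp: convex_Int convex_real_interval)
  moreover have "\<delta> > 0" using \<open>0 < \<epsilon>\<close> \<open>d > 0\<close> by (simp add: \<delta>_def)
  ultimately show ?thesis using \<open>0 < r\<close> unfolding monotone_on_def by blast
qed

end
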